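(* For arbitrary operators $X,Y$ on $(\mathbb{C}^d)^{\otimes 2p}$, all partitions $\mu,\nu,\mu',\nu'$ of $p$ with at most $d$ rows, and all indices, $$\operatorname{tr}\Big(\operatorname{twirl}(X)\,(E^\mu_{ij}\otimes E^\nu_{kl})\,Y\,(E^{\mu'}_{i'j'}\otimes E^{\nu'}_{k'l'})\Big)=\delta^{\mu\mu'}\delta^{\nu\nu'}\delta_{ij'}\delta_{kl'}\,\frac{1}{d_\mu d_\nu}\sum_{r=1}^{d_\mu}\sum_{s=1}^{d_\nu}\operatorname{tr}\Big(X\,(E^\mu_{rj}\otimes E^\nu_{sl})\,Y\,(E^\mu_{i'r}\otimes E^\nu_{k's})\Big).$$
   Context: Fix integers $d\ge 2$, $p\ge 2$. For $\sigma\in\mathcal{S}_p$, $V_\sigma$ is the operator on $(\mathbb{C}^d)^{\otimes p}$ with $V_\sigma(v_1\otimes\cdots\otimes v_p)=v_{\sigma^{-1}(1)}\otimes\cdots\otimes v_{\sigma^{-1}(p)}$. $d_\mu$ is the number of standard Young tableaux of shape $\mu$; $\varphi^\mu$ is the irrep $\mu$ of $\mathcal{S}_p$ in Young's orthogonal (Young–Yamanouchi) basis and $E^\mu_{ij}=\frac{d_\mu}{p!}\sum_\sigma\varphi^\mu_{ji}(\sigma^{-1})V_\sigma$ ($1\le i,j\le d_\mu$) the irreducible matrix units. On $(\mathbb{C}^d)^{\otimes 2p}$ (systems $1,\ldots,2p$), $A\otimes B$ has $A$ on systems $1,\ldots,p$ (its $k$-th tensor slot is system $p+1-k$) and $B$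 on systems $p+1,\ldots,2p$ (its $k$-th slot is system $p+k$). The twirl is $\operatorname{twirl}(X)=\frac{1}{(p!)^2}\sum_{\sigma_1,\sigma_2\in\mathcal{S}_p}(V_{\sigma_1}\otimes V_{\sigma_2})X(V_{\sigma_1^{-1}}\otimes V_{\sigma_2^{-1}})$. *)

theory Defs
  imports Complex_Main "HOL-Combinatorics.Combinatorics"
begin

text \<open>Computational basis of (C^d)^{tensor n}: index lists of length n with entries < d.
  Slot k (1-based) of a tensor product is list position k-1.
  Operators are represented by their matrix entries; only entries on idx d n matter.\<close>

type_synonym op = "nat list \<Rightarrow> nat list \<Rightarrow> complex"

definition idx :: "nat \<Rightarrow> nat \<Rightarrow> nat list set" where
  "idx d n = {xs. length xs = n \<and> (\<forall>x\<in>set xs. x < d)}"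

definition opmul :: "nat \<Rightarrow> nat \<Rightarrow> op \<Rightarrow> op \<Rightarrow> op" where
  "opmul d n A B = (\<lambda>xs ys. \<Sum>zs\<in>idx d n. A xs zs * B zs ys)"

definition optr :: "nat \<Rightarrow> nat \<Rightarrow> op \<Rightarrow> complex" where
  "optr d n A = (\<Sum>xs\<in>idx d n. A xs xs)"

text \<open>Permutations of {1..p} act on p tensor slots:
  V_sigma (v_1 x ... x v_p) = v_{sigma^-1 1} x ... x v_{sigma^-1 p}.\<close>

definition Vperm :: "nat \<Rightarrow> (nat \<Rightarrow> nat) \<Rightarrow> op" where
  "Vperm p \<sigma> = (\<lambda>ys xs. of_bool (\<forall>k\<in>{1..p}. ys ! (k - 1) = xs ! (inv \<sigma> k - 1)))"

text \<open>A tensor B on 2p systems: the k-th slot of A is system p+1-k, the k-th slot of B is system p+k.\<close>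

definition tens :: "nat \<Rightarrow> op \<Rightarrow> op \<Rightarrow> op" where
  "tens p A B = (\<lambda>zs ws. A (rev (take p zs)) (rev (take p ws)) * B (drop p zs) (drop p ws))"

definition twirl :: "nat \<Rightarrow> nat \<Rightarrow> op \<Rightarrow> op" where
  "twirl d p X = (\<lambda>zs ws. (1 / (of_nat (fact p))\<^sup>2) *
     (\<Sum>\<sigma>1\<in>{\<sigma>. \<sigma> permutes {1..p}}. \<Sum>\<sigma>2\<in>{\<sigma>. \<sigma> permutes {1..p}}.
        opmul d (2*p) (opmul d (2*p) (tens p (Vperm p \<sigma>1) (Vperm p \<sigma>2)) X)
                      (tens p (Vperm p (inv \<sigma>1)) (Vperm p (inv \<sigma>2))) zs ws))"

definition is_partition :: "nat \<Rightarrow> nat list \<Rightarrow> bool" where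
  "is_partition p \<mu> \<longleftrightarrow> sum_list \<mu> = p \<and> sorted_wrt (\<ge>) \<mu> \<and> 0 \<notin> set \<mu>"

text \<open>Cells (row, column), 0-based.\<close>
definition cells :: "nat list \<Rightarrow> (nat \<times> nat) set" where
  "cells \<mu> = {(r, c). r < length \<mu> \<and> c < \<mu> ! r}"

definition syt :: "nat list \<Rightarrow> (nat \<times> nat \<Rightarrow> nat) set" where
  "syt \<mu> = {T. bij_betw T (cells \<mu>) {1..sum_list \<mu>}
              \<and> (\<forall>x. x \<notin> cells \<mu> \<longrightarrow> T x = 0)
              \<and> (\<forall>r c. (r, Suc c) \<in> cells \<mu> \<longrightarrow> T (r, c) < T (r, Suc c))
              \<and> (\<forall>r c. (Suc r, c) \<in> cells \<mu> \<longrightarrow> T (r, c) < T (Suc r, c))}"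

definition dim :: "nat list \<Rightarrow> nat" where
  "dim \<mu> = card (syt \<mu>)"

text \<open>A fixed enumeration 1..d_mu of the standard tableaux (the Young-Yamanouchi basis vectors).\<close>
definition tab :: "nat list \<Rightarrow> nat \<Rightarrow> (nat \<times> nat \<Rightarrow> nat)" where
  "tab \<mu> = (SOME f. bij_betw f {1..dim \<mu>} (syt \<mu>))"

definition content :: "nat list \<Rightarrow> (nat \<times> nat \<Rightarrow> nat) \<Rightarrow> nat \<Rightarrow> int" where
  "content \<mu> T k = (let x = (THE x. x \<in> cells \<mu> \<and> T x = k) in int (snd x) - int (fst x))"

text \<open>Young's orthogonal form of the adjacent transposition s_k = (k k+1), 1 <= k < p:
  phi(s_k) e_T = (1/rho) e_T + sqrt(1 - 1/rho^2) e_{s_k T}, rho = c(k+1) - c(k) (axial distance).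
  Entry (a,b) is the coefficient of e_{T_a} in phi(s_k) e_{T_b}.\<close>
definition young_gen :: "nat list \<Rightarrow> nat \<Rightarrow> nat \<Rightarrow> nat \<Rightarrow> complex" where
  "young_gen \<mu> k a b =
     (let Ta = tab \<mu> a; Tb = tab \<mu> b;
          \<rho> = real_of_int (content \<mu> Tb (Suc k) - content \<mu> Tb k)
      in if a = b then complex_of_real (1 / \<rho>)
         else if Ta = (\<lambda>x. Transposition.transpose k (Suc k) (Tb x))
              then complex_of_real (sqrt (1 - 1 / \<rho>\<^sup>2))
         else 0)"

definition matmul :: "nat \<Rightarrow> (nat \<Rightarrow> nat \<Rightarrow> complex) \<Rightarrow> (nat \<Rightarrow> nat \<Rightarrow> complex) \<Rightarrow> nat \<Rightarrow> nat \<Rightarrow> complex" where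
  "matmul n A B = (\<lambda>a b. \<Sum>c\<in>{1..n}. A a c * B c b)"

text \<open>phi^mu: the representation of S_p (p = |mu|) in Young's orthogonal basis, i.e. the
  homomorphism (matrices indexed by 1..d_mu) determined by its values on the adjacent
  transpositions, which generate S_p.\<close>
definition yrep :: "nat list \<Rightarrow> (nat \<Rightarrow> nat) \<Rightarrow> nat \<Rightarrow> nat \<Rightarrow> complex" where
  "yrep \<mu> = (SOME \<phi>.
      (\<forall>\<sigma> \<tau>. \<sigma> permutes {1..sum_list \<mu>} \<longrightarrow> \<tau> permutes {1..sum_list \<mu>} \<longrightarrow>
         (\<forall>a\<in>{1..dim \<mu>}. \<forall>b\<in>{1..dim \<mu>}. \<phi> (\<sigma> \<circ> \<tau>) a b = matmul (dim \<mu>) (\<phi> \<sigma>) (\<phi> \<tau>) a b))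
    \<and> (\<forall>k\<in>{1..<sum_list \<mu>}. \<forall>a\<in>{1..dim \<mu>}. \<forall>b\<in>{1..dim \<mu>}.
         \<phi> (Transposition.transpose k (Suc k)) a b = young_gen \<mu> k a b))"

definition Eunit :: "nat list \<Rightarrow> nat \<Rightarrow> nat \<Rightarrow> op" where
  "Eunit \<mu> i j = (\<lambda>ys xs. (of_nat (dim \<mu>) / of_nat (fact (sum_list \<mu>))) *
      (\<Sum>\<sigma>\<in>{\<sigma>. \<sigma> permutes {1..sum_list \<mu>}}. yrep \<mu> (inv \<sigma>) j i * Vperm (sum_list \<mu>) \<sigma> ys xs))"

end

theory Submission
  imports Defs "HOL-Library.Product_Order"
begin

text \<open>
  By cyclicity of the
  trace the permutations move onto the matrix units, where
  \<open>V\<^sub>\<sigma> E\<^sub>i\<^sub>j = \<Sum>\<^sub>r \<phi>\<^sub>r\<^sub>i(\<sigma>) E\<^sub>r\<^sub>j\<close> and \<open>E\<^sub>i\<^sub>j V\<^sub>\<sigma> = \<Sum>\<^sub>r \<phi>\<^sub>j\<^sub>r(\<sigma>) E\<^sub>i\<^sub>r\<close>; the sums over \<open>\<sigma>\<close> and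
  \<open>\<tau>\<close> then become Schur orthogonality sums \<open>\<Sum>\<^sub>\<sigma> \<phi>\<^sup>\<mu>\<^sub>r\<^sub>i(\<sigma>\<^sup>-\<^sup>1) \<phi>\<^sup>\<mu>\<^sup>'\<^sub>j\<^sub>r\<^sub>'(\<sigma>) = \<delta> p! / d\<^sub>\<mu>\<close>.

  Since \<open>\<phi>\<^sup>\<mu>\<close> is only specified through Young's orthogonal form on adjacent transpositions,
  one needs that these matrices satisfy the Coxeter relations of \<open>S\<^sub>p\<close>. Schur orthogonality is
  then obtained without irreducibility arguments: the averaged matrix commutes with the
  Jucys--Murphy elements, which are diagonal in Young's basis with the contents as eigenvalues;
  content vectors determine standard tableaux, so the averaged matrix is diagonal, and it is a
  multiple of the identity because any two standard tableaux are connected by admissible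
  adjacent transpositions, whose matrix entries are nonzero.
\<close>

section \<open>Presentation of the symmetric group by adjacent transpositions\<close>

abbreviation (input) adj_transp :: "nat \<Rightarrow> nat \<Rightarrow> nat" where
  "adj_transp k \<equiv> Transposition.transpose k (Suc k)"

definition cycle_to_top :: "nat \<Rightarrow> nat \<Rightarrow> nat \<Rightarrow> nat" where
  "cycle_to_top j m x = (if x = j \<and> j \<le> m then m else if j < x \<and> x \<le> m then x - 1 else x)"

lemma cycle_to_top_self: "cycle_to_top m m = id"
  by (auto simp: fun_eq_iff cycle_to_top_def)

lemma cycle_to_top_step: "j < m \<Longrightarrow> cycle_to_top j m = cycle_to_top (Suc j) m \<circ> adj_transp j"
  by (auto simp: fun_eq_iff cycle_to_top_def Transposition.transpose_def)

lemma cycle_to_top_comm: "Suc k < j \<Longrightarrow> cycle_to_top j m \<circ> adj_transp k = adj_transp k \<circ> cycle_to_top j m"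
  by (auto simp: fun_eq_iff cycle_to_top_def Transposition.transpose_def)

lemma cycle_to_top_shift:
  "j < k \<Longrightarrow> k < m \<Longrightarrow> cycle_to_top j m \<circ> adj_transp k = adj_transp (k - 1) \<circ> cycle_to_top j m"
  by (auto simp: fun_eq_iff cycle_to_top_def Transposition.transpose_def)

lemma permutes_cycle_to_top: "1 \<le> j \<Longrightarrow> cycle_to_top j m permutes {1..m}"
  unfolding permutes_def
proof (intro conjI allI)
  fix y
  show "\<exists>!x. cycle_to_top j m x = y"
    by (rule ex1I[of _ "if y = m \<and> j \<le> m then j else if j \<le> y \<and> y < m then Suc y else y"])
      (auto simp: cycle_to_top_def split: if_splits)
qed (auto simp: cycle_to_top_def)

lemma transpose_comp_cancel:
  "Transposition.transpose a b \<circ> (Transposition.transpose a b \<circ> f) = f"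
  by (simp add: fun_eq_iff)

lemma permutes_fix_top:
  assumes "s permutes {1..Suc m}" "s (Suc m) = Suc m"
  shows "s permutes {1..m}"
  using assms unfolding permutes_def by (metis atLeastAtMost_iff le_SucE)

locale coxeter_relations =
  fixes mul :: "'a \<Rightarrow> 'a \<Rightarrow> 'a" (infixl "\<cdot>" 70)
    and one :: 'a and C :: "'a set" and g :: "nat \<Rightarrow> 'a" and n :: nat
  assumes assoc: "(a \<cdot> b) \<cdot> c = a \<cdot> (b \<cdot> c)"
    and one_in: "one \<in> C" and mul_in: "a \<in> C \<Longrightarrow> b \<in> C \<Longrightarrow> a \<cdot> b \<in> C" and gen_in: "g k \<in> C"
    and one_left: "a \<in> C \<Longrightarrow> one \<cdot> a = a" and one_right: "a \<in> C \<Longrightarrow> a \<cdot> one = a"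
    and gen_square: "1 \<le> k \<Longrightarrow> k < n \<Longrightarrow> g k \<cdot> g k = one"
    and gen_braid: "1 \<le> k \<Longrightarrow> Suc k < n \<Longrightarrow> g k \<cdot> g (Suc k) \<cdot> g k = g (Suc k) \<cdot> g k \<cdot> g (Suc k)"
    and gen_comm: "1 \<le> i \<Longrightarrow> Suc i < j \<Longrightarrow> j < n \<Longrightarrow> g i \<cdot> g j = g j \<cdot> g i"
begin

fun gen_word :: "nat list \<Rightarrow> 'a" where
  "gen_word [] = one"
| "gen_word (x # xs) = g x \<cdot> gen_word xs"

lemma gen_word_in: "gen_word xs \<in> C"
  by (induction xs) (auto intro: mul_in gen_in one_in)

lemma gen_word_comm:
  assumes "1 \<le> k" "\<forall>x\<in>set xs. Suc k < x \<and> x < n"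
  shows "gen_word xs \<cdot> g k = g k \<cdot> gen_word xs"
  using assms(2)
proof (induction xs)
  case Nil
  then show ?case by (simp add: one_left one_right gen_in)
next
  case (Cons x xs)
  have "g x \<cdot> g k = g k \<cdot> g x"
    using Cons.prems assms(1) by (intro gen_comm[symmetric]) auto
  then show ?case
    using Cons by (simp add: assoc) (simp add: assoc[symmetric])
qed

lemma gen_word_shift:
  assumes "j \<le> k" "1 \<le> j" "Suc k < m" "m \<le> n"
  shows "g (Suc k) \<cdot> gen_word [j..<m] = gen_word [j..<m] \<cdot> g k"
  using assms(1,2)
proof (induction j rule: inc_induct)
  case base
  have word: "gen_word [k..<m] = g k \<cdot> (g (Suc k) \<cdot> gen_word [Suc (Suc k)..<m])"
    using assms by (simp add: upt_conv_Cons)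
  have far: "gen_word [Suc (Suc k)..<m] \<cdot> g k = g k \<cdot> gen_word [Suc (Suc k)..<m]"
    using base assms by (intro gen_word_comm) auto
  have "g (Suc k) \<cdot> gen_word [k..<m] = (g (Suc k) \<cdot> g k \<cdot> g (Suc k)) \<cdot> gen_word [Suc (Suc k)..<m]"
    unfolding word by (simp add: assoc)
  also have "g (Suc k) \<cdot> g k \<cdot> g (Suc k) = g k \<cdot> g (Suc k) \<cdot> g k"
    using gen_braid base assms by simp
  finally show ?case
    unfolding word by (simp add: assoc far)
next
  case (step j)
  have "g (Suc k) \<cdot> gen_word [j..<m] = (g (Suc k) \<cdot> g j) \<cdot> gen_word [Suc j..<m]"
    using step assms by (simp add: upt_conv_Cons assoc)
  also have "g (Suc k) \<cdot> g j = g j \<cdot> g (Suc k)"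
    using step assms by (intro gen_comm[symmetric]) auto
  finally show ?case
    using step assms by (simp add: upt_conv_Cons assoc)
qed

text \<open>Writing \<open>j = s (m + 1)\<close>, the permutation \<open>s\<close> of \<open>{1..m + 1}\<close> factors as
  \<open>s\<^sub>j \<circ> \<dots> \<circ> s\<^sub>m \<circ> s'\<close> with \<open>s' = cycle_to_top j (m + 1) \<circ> s\<close> fixing \<open>m + 1\<close>.\<close>

fun perm_rep :: "nat \<Rightarrow> (nat \<Rightarrow> nat) \<Rightarrow> 'a" where
  "perm_rep 0 s = one"
| "perm_rep (Suc m) s = gen_word [s (Suc m)..<Suc m] \<cdot> perm_rep m (cycle_to_top (s (Suc m)) (Suc m) \<circ> s)"

lemma perm_rep_in: "perm_rep m s \<in> C"
  by (induction m arbitrary: s) (auto intro: mul_in gen_word_in one_in)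

lemma perm_rep_Suc:
  "t (Suc m) = j \<Longrightarrow> perm_rep (Suc m) t = gen_word [j..<Suc m] \<cdot> perm_rep m (cycle_to_top j (Suc m) \<circ> t)"
  by simp

declare perm_rep.simps(2) [simp del]

lemma perm_rep_adj_transp_top:
  assumes "t (Suc m) = Suc k" "k \<le> m"
  shows "perm_rep (Suc m) (adj_transp k \<circ> t) = g k \<cdot> perm_rep (Suc m) t"
proof -
  have "perm_rep (Suc m) (adj_transp k \<circ> t)
      = gen_word [k..<Suc m] \<cdot> perm_rep m (cycle_to_top k (Suc m) \<circ> (adj_transp k \<circ> t))"
    using assms by (intro perm_rep_Suc) simp
  also have "cycle_to_top k (Suc m) \<circ> (adj_transp k \<circ> t) = cycle_to_top (Suc k) (Suc m) \<circ> t"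
    using assms by (simp add: cycle_to_top_step[of k "Suc m"] comp_assoc transpose_comp_cancel)
  also have "gen_word [k..<Suc m] = g k \<cdot> gen_word [Suc k..<Suc m]"
    using assms by (simp add: upt_conv_Cons del: upt_Suc)
  finally show ?thesis
    by (simp only: assoc perm_rep_Suc[of t m "Suc k", OF assms(1)])
qed

lemma perm_rep_adj_transp_far:
  assumes IH: "\<And>s k. m \<le> n \<Longrightarrow> s permutes {1..m} \<Longrightarrow> 1 \<le> k \<Longrightarrow> k < m \<Longrightarrow>
      perm_rep m (adj_transp k \<circ> s) = g k \<cdot> perm_rep m s"
    and "Suc m \<le> n" and s: "s permutes {1..Suc m}" and k: "1 \<le> k" "k < Suc m"
    and far: "s (Suc m) \<noteq> k" "s (Suc m) \<noteq> Suc k"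
  shows "perm_rep (Suc m) (adj_transp k \<circ> s) = g k \<cdot> perm_rep (Suc m) s"
proof -
  define j where "j = s (Suc m)"
  have j: "1 \<le> j" "j \<le> Suc m"
    using permutes_in_image[OF s, of "Suc m"] by (auto simp: j_def)
  define s' where "s' = cycle_to_top j (Suc m) \<circ> s"
  have s': "s' permutes {1..m}"
  proof (rule permutes_fix_top)
    show "s' permutes {1..Suc m}"
      unfolding s'_def by (rule permutes_compose[OF s permutes_cycle_to_top[OF j(1)]])
    show "s' (Suc m) = Suc m"
      using j by (simp add: s'_def j_def[symmetric] cycle_to_top_def)
  qed
  have "perm_rep (Suc m) (adj_transp k \<circ> s)
      = gen_word [j..<Suc m] \<cdot> perm_rep m (cycle_to_top j (Suc m) \<circ> (adj_transp k \<circ> s))"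
    using far by (intro perm_rep_Suc) (simp add: j_def Transposition.transpose_def)
  moreover have "perm_rep (Suc m) s = gen_word [j..<Suc m] \<cdot> perm_rep m s'"
    unfolding s'_def by (rule perm_rep_Suc) (simp add: j_def)
  moreover consider "Suc k < j" | "j < k"
    using far by (fastforce simp: j_def)
  then have "gen_word [j..<Suc m] \<cdot> perm_rep m (cycle_to_top j (Suc m) \<circ> (adj_transp k \<circ> s))
      = g k \<cdot> (gen_word [j..<Suc m] \<cdot> perm_rep m s')"
  proof cases
    case 1
    then have "cycle_to_top j (Suc m) \<circ> (adj_transp k \<circ> s) = adj_transp k \<circ> s'"
      by (simp only: s'_def o_assoc cycle_to_top_comm)
    then show ?thesis
      using 1 k j s' assms(2) IH[of s' k] gen_word_comm[of k "[j..<Suc m]"] by (simp add: assoc[symmetric] del: upt_Suc)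
  next
    case 2
    then have "cycle_to_top j (Suc m) \<circ> (adj_transp k \<circ> s) = adj_transp (k - 1) \<circ> s'"
      using k by (simp add: s'_def o_assoc cycle_to_top_shift)
    then show ?thesis
      using 2 k j s' assms(2) IH[of s' "k - 1"] gen_word_shift[of j "k - 1" "Suc m"]
      by (simp add: assoc[symmetric] del: upt_Suc)
  qed
  ultimately show ?thesis
    by simp
qed

lemma perm_rep_adj_transp:
  assumes "m \<le> n" "s permutes {1..m}" "1 \<le> k" "k < m"
  shows "perm_rep m (adj_transp k \<circ> s) = g k \<cdot> perm_rep m s"
  using assms
proof (induction m arbitrary: s k)
  case (Suc m)
  consider "s (Suc m) = Suc k" | "s (Suc m) = k" | "s (Suc m) \<noteq> k" "s (Suc m) \<noteq> Suc k"
    by blast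
  then show ?case
  proof cases
    case 1
    then show ?thesis
      using Suc.prems by (intro perm_rep_adj_transp_top) auto
  next
    case 2
    then have "perm_rep (Suc m) (adj_transp k \<circ> (adj_transp k \<circ> s)) = g k \<cdot> perm_rep (Suc m) (adj_transp k \<circ> s)"
      using Suc.prems by (intro perm_rep_adj_transp_top) auto
    then have "g k \<cdot> perm_rep (Suc m) s = (g k \<cdot> g k) \<cdot> perm_rep (Suc m) (adj_transp k \<circ> s)"
      by (simp only: transpose_comp_cancel assoc)
    then show ?thesis
      using Suc.prems by (simp only: gen_square one_left perm_rep_in)
  next
    case 3
    then show ?thesis
      using Suc.prems by (intro perm_rep_adj_transp_far[OF Suc.IH]) auto
  qed
qed simp

lemma perm_rep_id: "perm_rep m id = one"
  by (induction m) (simp_all add: perm_rep.simps cycle_to_top_self one_left one_in)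

lemma perm_rep_gen: "m \<le> n \<Longrightarrow> 1 \<le> k \<Longrightarrow> k < m \<Longrightarrow> perm_rep m (adj_transp k) = g k"
  using perm_rep_adj_transp[of m id k] by (simp add: perm_rep_id one_right gen_in)

lemma perm_rep_apply_adj_transps:
  assumes "m \<le> n" "\<forall>x\<in>set xs. 1 \<le> x \<and> x < m" "t permutes {1..m}"
  shows "perm_rep m (apply_adj_transps xs \<circ> t) = gen_word xs \<cdot> perm_rep m t"
  using assms(2)
proof (induction xs)
  case Nil
  then show ?case by (simp add: one_left perm_rep_in)
next
  case (Cons x xs)
  have "apply_adj_transps xs \<circ> t permutes {1..m}"
    using Cons.prems assms(3) by (intro permutes_compose permutes_apply_adj_transps) auto
  then have "perm_rep m (adj_transp x \<circ> (apply_adj_transps xs \<circ> t))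
      = g x \<cdot> perm_rep m (apply_adj_transps xs \<circ> t)"
    using Cons.prems assms(1) by (intro perm_rep_adj_transp) auto
  also have "perm_rep m (apply_adj_transps xs \<circ> t) = gen_word xs \<cdot> perm_rep m t"
    by (rule Cons.IH) (use Cons.prems in simp)
  finally show ?case
    by (simp add: o_assoc assoc)
qed

lemma perm_rep_mult:
  assumes "m \<le> n" "s permutes {1..m}" "t permutes {1..m}"
  shows "perm_rep m (s \<circ> t) = perm_rep m s \<cdot> perm_rep m t"
  using assms(2) finite_atLeastAtMost assms(3)
proof (induction s arbitrary: t rule: permutes_induct)
  case id
  then show ?case by (simp add: perm_rep_id[unfolded id_def] one_left perm_rep_in)
next
  case (swap a b q)
  define xs where "xs = adj_transp_seq (min a b) (max a b)"
  have swap_eq: "Transposition.transpose a b = apply_adj_transps xs"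
    using swap by (simp add: xs_def adj_transp_seq_correct transpose_commute min_def max_def)
  have xs: "\<forall>x\<in>set xs. 1 \<le> x \<and> x < m"
    using swap by (auto simp: xs_def set_adj_transp_seq)
  have "perm_rep m (apply_adj_transps xs \<circ> (q \<circ> t)) = gen_word xs \<cdot> perm_rep m (q \<circ> t)"
    using swap by (intro perm_rep_apply_adj_transps[OF assms(1) xs] permutes_compose)
  also have "perm_rep m (q \<circ> t) = perm_rep m q \<cdot> perm_rep m t"
    by (rule swap.IH[OF swap.prems])
  also have "gen_word xs \<cdot> (perm_rep m q \<cdot> perm_rep m t) = perm_rep m (apply_adj_transps xs \<circ> q) \<cdot> perm_rep m t"
    using perm_rep_apply_adj_transps[OF assms(1) xs \<open>q permutes {1..m}\<close>] by (simp add: assoc)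
  finally show ?case
    by (simp only: swap_eq comp_assoc)
qed

end

lemma coxeter_presentation:
  assumes "coxeter_relations mul one C g n"
  shows "\<exists>\<phi>. (\<forall>s t. s permutes {1..n} \<longrightarrow> t permutes {1..n} \<longrightarrow> \<phi> (s \<circ> t) = mul (\<phi> s) (\<phi> t))
            \<and> (\<forall>k. 1 \<le> k \<longrightarrow> k < n \<longrightarrow> \<phi> (adj_transp k) = g k)"
  using coxeter_relations.perm_rep_mult[OF assms] coxeter_relations.perm_rep_gen[OF assms] by blast

section \<open>Standard tableaux on down-closed sets of cells\<close>

type_synonym cell = "nat \<times> nat"

definition down_closed :: "cell set \<Rightarrow> bool" where
  "down_closed D \<longleftrightarrow> (\<forall>y\<in>D. \<forall>x\<le>y. x \<in> D)"

definition numbering :: "cell set \<Rightarrow> (cell \<Rightarrow> nat) \<Rightarrow> bool" where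
  "numbering D T \<longleftrightarrow> bij_betw T D {1..card D} \<and> (\<forall>x. x \<notin> D \<longrightarrow> T x = 0)"

text \<open>Cells are ordered componentwise, so standard tableaux are the strictly monotone numberings.\<close>

definition standard_tableau :: "cell set \<Rightarrow> (cell \<Rightarrow> nat) \<Rightarrow> bool" where
  "standard_tableau D T \<longleftrightarrow> numbering D T \<and> (\<forall>x\<in>D. \<forall>y\<in>D. x < y \<longrightarrow> T x < T y)"

definition entry_cell :: "cell set \<Rightarrow> (cell \<Rightarrow> nat) \<Rightarrow> nat \<Rightarrow> cell" where
  "entry_cell D T k = (THE x. x \<in> D \<and> T x = k)"

definition entry_content :: "cell set \<Rightarrow> (cell \<Rightarrow> nat) \<Rightarrow> nat \<Rightarrow> int" where
  "entry_content D T k = int (snd (entry_cell D T k)) - int (fst (entry_cell D T k))"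

definition axial_dist :: "cell set \<Rightarrow> (cell \<Rightarrow> nat) \<Rightarrow> nat \<Rightarrow> int" where
  "axial_dist D T k = entry_content D T (Suc k) - entry_content D T k"

lemma down_closedD: "down_closed D \<Longrightarrow> y \<in> D \<Longrightarrow> x \<le> y \<Longrightarrow> x \<in> D"
  unfolding down_closed_def by blast

lemma numbering_entry_cell:
  assumes "numbering D T" "k \<in> {1..card D}"
  shows "entry_cell D T k \<in> D" "T (entry_cell D T k) = k"
proof -
  have "\<exists>!x. x \<in> D \<and> T x = k"
    using assms unfolding numbering_def bij_betw_def inj_on_def by (metis imageE)
  then have "entry_cell D T k \<in> D \<and> T (entry_cell D T k) = k"
    unfolding entry_cell_def by (rule theI')
  then show "entry_cell D T k \<in> D" "T (entry_cell D T k) = k"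
    by auto
qed

lemma entry_cell_numbering: "numbering D T \<Longrightarrow> x \<in> D \<Longrightarrow> entry_cell D T (T x) = x"
  unfolding entry_cell_def numbering_def bij_betw_def inj_on_def by (rule the1_equality) blast+

lemma numbering_range: "numbering D T \<Longrightarrow> x \<in> D \<Longrightarrow> T x \<in> {1..card D}"
  unfolding numbering_def bij_betw_def by blast

lemma numbering_outside: "numbering D T \<Longrightarrow> x \<notin> D \<Longrightarrow> T x = 0"
  unfolding numbering_def by blast

lemma numbering_inj: "numbering D T \<Longrightarrow> x \<in> D \<Longrightarrow> y \<in> D \<Longrightarrow> T x = T y \<Longrightarrow> x = y"
  unfolding numbering_def bij_betw_def inj_on_def by blast

lemma numbering_image_entry_cell: "numbering D T \<Longrightarrow> D = entry_cell D T ` {1..card D}"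
  using numbering_entry_cell(1) entry_cell_numbering numbering_range by (metis image_eqI subsetI subset_antisym image_subsetI)

lemma numbering_adj_transp:
  assumes "numbering D T" "1 \<le> k" "k < card D"
  shows "numbering D (adj_transp k \<circ> T)"
  unfolding numbering_def
proof
  have "bij_betw (adj_transp k) {1..card D} {1..card D}"
    using assms by (intro permutes_imp_bij permutes_swap_id) auto
  then show "bij_betw (adj_transp k \<circ> T) D {1..card D}"
    using assms(1) unfolding numbering_def by (blast intro: bij_betw_trans)
  show "\<forall>x. x \<notin> D \<longrightarrow> (adj_transp k \<circ> T) x = 0"
    using assms unfolding numbering_def by (auto simp: Transposition.transpose_def)
qed

lemma entry_cell_adj_transp:
  assumes "numbering D T" "1 \<le> k" "k < card D" "j \<in> {1..card D}"
  shows "entry_cell D (adj_transp k \<circ> T) j = entry_cell D T (adj_transp k j)"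
proof -
  have j: "adj_transp k j \<in> {1..card D}"
    using assms by (auto simp: Transposition.transpose_def)
  have "entry_cell D (adj_transp k \<circ> T) ((adj_transp k \<circ> T) (entry_cell D T (adj_transp k j)))
      = entry_cell D T (adj_transp k j)"
    by (rule entry_cell_numbering[OF numbering_adj_transp[OF assms(1-3)] numbering_entry_cell(1)[OF assms(1) j]])
  then show ?thesis
    using numbering_entry_cell(2)[OF assms(1) j] by simp
qed

lemma entry_content_adj_transp:
  "numbering D T \<Longrightarrow> 1 \<le> k \<Longrightarrow> k < card D \<Longrightarrow> j \<in> {1..card D} \<Longrightarrow>
   entry_content D (adj_transp k \<circ> T) j = entry_content D T (adj_transp k j)"
  by (simp add: entry_content_def entry_cell_adj_transp)

lemma axial_dist_adj_transp:
  assumes "numbering D T" "1 \<le> k" "Suc k \<le> card D"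
  shows "axial_dist D (adj_transp k \<circ> T) k = - axial_dist D T k"
  using assms by (simp add: axial_dist_def entry_content_adj_transp)

lemma standard_tableau_numbering: "standard_tableau D T \<Longrightarrow> numbering D T"
  unfolding standard_tableau_def by simp

lemma standard_tableau_less: "standard_tableau D T \<Longrightarrow> x \<in> D \<Longrightarrow> y \<in> D \<Longrightarrow> x < y \<Longrightarrow> T x < T y"
  unfolding standard_tableau_def by blast

lemma rows_columns_mono:
  fixes T :: "cell \<Rightarrow> nat"
  assumes D: "down_closed D"
    and rows: "\<And>r c. (r, Suc c) \<in> D \<Longrightarrow> T (r, c) < T (r, Suc c)"
    and cols: "\<And>r c. (Suc r, c) \<in> D \<Longrightarrow> T (r, c) < T (Suc r, c)"
    and "(r', c') \<in> D" "(r, c) \<le> (r', c')"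
  shows "T (r, c) \<le> T (r', c')"
proof -
  have row: "T (r, c) \<le> T (r, c')" if "c \<le> c'" "(r, c') \<in> D" for r c c'
    using that
  proof (induction c' rule: dec_induct)
    case (step c')
    have "(r, c') \<in> D"
      using down_closedD[OF D step.prems, of "(r, c')"] by simp
    then have "T (r, c) \<le> T (r, c')"
      by (rule step.IH)
    then show ?case
      using rows[OF step.prems] by simp
  qed simp
  have col: "T (r, c) \<le> T (r', c)" if "r \<le> r'" "(r', c) \<in> D" for r r' c
    using that
  proof (induction r' rule: dec_induct)
    case (step r')
    have "(r', c) \<in> D"
      using down_closedD[OF D step.prems, of "(r', c)"] by simp
    then have "T (r, c) \<le> T (r', c)"
      by (rule step.IH)
    then show ?case
      using cols[OF step.prems] by simp
  qed simp
  have "T (r, c) \<le> T (r, c')" "T (r, c') \<le> T (r', c')"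
    using row col down_closedD[OF D] assms(4,5) by auto
  then show ?thesis
    by simp
qed

lemma standard_tableau_iff_rows_columns:
  assumes "down_closed D"
  shows "standard_tableau D T \<longleftrightarrow> numbering D T
      \<and> (\<forall>r c. (r, Suc c) \<in> D \<longrightarrow> T (r, c) < T (r, Suc c))
      \<and> (\<forall>r c. (Suc r, c) \<in> D \<longrightarrow> T (r, c) < T (Suc r, c))"
proof
  assume T: "standard_tableau D T"
  have "T x < T y" if "y \<in> D" "x < y" for x y
    using T that down_closedD[OF assms that(1)] by (simp add: standard_tableau_def less_imp_le)
  then show "numbering D T \<and> (\<forall>r c. (r, Suc c) \<in> D \<longrightarrow> T (r, c) < T (r, Suc c))
      \<and> (\<forall>r c. (Suc r, c) \<in> D \<longrightarrow> T (r, c) < T (Suc r, c))"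
    using T by (simp add: standard_tableau_def less_prod_def)
next
  assume T: "numbering D T \<and> (\<forall>r c. (r, Suc c) \<in> D \<longrightarrow> T (r, c) < T (r, Suc c))
      \<and> (\<forall>r c. (Suc r, c) \<in> D \<longrightarrow> T (r, c) < T (Suc r, c))"
  have "T x < T y" if "x \<in> D" "y \<in> D" "x < y" for x y
    using rows_columns_mono[OF assms, of T "fst y" "snd y" "fst x" "snd x"] T numbering_inj[of D T x y] that
    by (auto simp: less_le less_eq_prod_def)
  then show "standard_tableau D T"
    using T by (simp add: standard_tableau_def)
qed

lemma entry_cells_between:
  assumes T: "standard_tableau D T" and k: "1 \<le> k" "Suc k \<le> card D" and z: "z \<in> D"
    and le: "entry_cell D T k \<le> z" "z \<le> entry_cell D T (Suc k)"
  shows "z = entry_cell D T k \<or> z = entry_cell D T (Suc k)"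
proof (rule ccontr)
  assume "\<not> ?thesis"
  then have less: "entry_cell D T k < z" "z < entry_cell D T (Suc k)"
    using le by (auto simp: order.strict_iff_order)
  have N: "numbering D T"
    using T by (rule standard_tableau_numbering)
  have "k < T z"
    using standard_tableau_less[OF T _ z less(1)] numbering_entry_cell[OF N, of k] k by simp
  moreover have "T z < Suc k"
    using standard_tableau_less[OF T z _ less(2)] numbering_entry_cell[OF N, of "Suc k"] k by simp
  ultimately show False
    by simp
qed

lemma entry_cell_Suc_not_le:
  assumes T: "standard_tableau D T" and k: "1 \<le> k" "Suc k \<le> card D"
  shows "\<not> entry_cell D T (Suc k) \<le> entry_cell D T k"
proof
  assume le: "entry_cell D T (Suc k) \<le> entry_cell D T k"
  have N: "numbering D T"
    using T by (rule standard_tableau_numbering)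
  note x = numbering_entry_cell[OF N, of k] and y = numbering_entry_cell[OF N, of "Suc k"]
  have "entry_cell D T (Suc k) \<noteq> entry_cell D T k"
    using x(2) y(2) k by force
  then have "T (entry_cell D T (Suc k)) < T (entry_cell D T k)"
    using le x(1) y(1) k by (intro standard_tableau_less[OF T]) (simp_all add: order.strict_iff_order)
  then show False
    using x(2) y(2) k by simp
qed

text \<open>Comparable cells holding consecutive entries are adjacent, as no cell lies between them.\<close>

lemma axial_dist_comparable:
  assumes T: "standard_tableau D T" and D: "down_closed D" and k: "1 \<le> k" "Suc k \<le> card D"
    and less: "entry_cell D T k < entry_cell D T (Suc k)"
  shows "\<bar>axial_dist D T k\<bar> = 1"
proof -
  obtain r c r' c' where x: "entry_cell D T k = (r, c)" and y: "entry_cell D T (Suc k) = (r', c')"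
    by fastforce
  have yD: "(r', c') \<in> D"
    using numbering_entry_cell(1)[OF standard_tableau_numbering[OF T], of "Suc k"] k y by simp
  have between: "z = (r, c) \<or> z = (r', c')" if "(r, c) \<le> z" "z \<le> (r', c')" for z
    using entry_cells_between[OF T k down_closedD[OF D yD that(2)]] that x y by simp
  have le: "r \<le> r'" "c \<le> c'" "(r, c) \<noteq> (r', c')"
    using less x y by (auto simp: less_prod_def)
  then consider "r = r'" "c' = Suc c" | "c = c'" "r' = Suc r"
    using between[of "(r, c')"] between[of "(r, Suc c)"] between[of "(Suc r, c)"]
    by (cases "r = r'"; cases "c = c'") auto
  then show ?thesis
    using x y by cases (auto simp: axial_dist_def entry_content_def)
qed

lemma axial_dist_incomparable:
  assumes T: "standard_tableau D T" and k: "1 \<le> k" "Suc k \<le> card D"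
    and not_less: "\<not> entry_cell D T k < entry_cell D T (Suc k)"
  shows "\<bar>axial_dist D T k\<bar> \<ge> 2"
proof -
  obtain r c r' c' where x: "entry_cell D T k = (r, c)" and y: "entry_cell D T (Suc k) = (r', c')"
    by fastforce
  have "\<not> (r', c') \<le> (r, c)"
    using entry_cell_Suc_not_le[OF T k] x y by simp
  moreover from this have "\<not> (r, c) \<le> (r', c')"
    using not_less x y unfolding less_prod_def by (auto simp del: Pair_le)
  ultimately show ?thesis
    using x y by (auto simp: axial_dist_def entry_content_def)
qed

lemma axial_dist_nonzero:
  "standard_tableau D T \<Longrightarrow> down_closed D \<Longrightarrow> 1 \<le> k \<Longrightarrow> Suc k \<le> card D \<Longrightarrow> axial_dist D T k \<noteq> 0"
  using axial_dist_comparable axial_dist_incomparable by fastforce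

lemma entry_content_neq_Suc:
  "standard_tableau D T \<Longrightarrow> down_closed D \<Longrightarrow> 1 \<le> k \<Longrightarrow> Suc k \<le> card D \<Longrightarrow>
   entry_content D T k \<noteq> entry_content D T (Suc k)"
  using axial_dist_nonzero by (fastforce simp: axial_dist_def)

lemma standard_tableau_adj_transp_iff:
  assumes T: "standard_tableau D T" and k: "1 \<le> k" "Suc k \<le> card D"
  shows "standard_tableau D (adj_transp k \<circ> T) \<longleftrightarrow> \<not> entry_cell D T k < entry_cell D T (Suc k)"
proof -
  have N: "numbering D T"
    using T by (rule standard_tableau_numbering)
  note cells = numbering_entry_cell[OF N, of k] numbering_entry_cell[OF N, of "Suc k"]
  show ?thesis
  proof
    assume "standard_tableau D (adj_transp k \<circ> T)"
    then show "\<not> entry_cell D T k < entry_cell D T (Suc k)"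
      using cells k standard_tableau_less[of D "adj_transp k \<circ> T"] by fastforce
  next
    assume incomparable: "\<not> entry_cell D T k < entry_cell D T (Suc k)"
    have "adj_transp k (T x) < adj_transp k (T y)" if "x \<in> D" "y \<in> D" "x < y" for x y
    proof -
      have "\<not> (T x = k \<and> T y = Suc k)"
        using incomparable that entry_cell_numbering[OF N] by metis
      then show ?thesis
        using standard_tableau_less[OF T that] by (auto simp: Transposition.transpose_def)
    qed
    then show "standard_tableau D (adj_transp k \<circ> T)"
      using numbering_adj_transp[OF N] k by (simp add: standard_tableau_def)
  qed
qed

lemma entry_content_neq_Suc_Suc:
  assumes T: "standard_tableau D T" and D: "down_closed D" and k: "1 \<le> k" "Suc (Suc k) \<le> card D"
  shows "entry_content D T k \<noteq> entry_content D T (Suc (Suc k))"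
proof
  assume eq: "entry_content D T k = entry_content D T (Suc (Suc k))"
  have N: "numbering D T"
    using T by (rule standard_tableau_numbering)
  obtain r c r' c' where x: "entry_cell D T k = (r, c)" and z: "entry_cell D T (Suc (Suc k)) = (r', c')"
    by fastforce
  have xD: "(r, c) \<in> D" "T (r, c) = k" and zD: "(r', c') \<in> D" "T (r', c') = Suc (Suc k)"
    using numbering_entry_cell[OF N, of k] numbering_entry_cell[OF N, of "Suc (Suc k)"] x z k by auto
  have "int c - int r = int c' - int r'"
    using eq x z by (simp add: entry_content_def)
  moreover have "\<not> (r', c') < (r, c)"
    using standard_tableau_less[OF T zD(1) xD(1)] xD zD by auto
  moreover have "(r, c) \<noteq> (r', c')"
    using xD zD by auto
  ultimately have "r < r'" "c < c'"
    by (auto simp: less_prod_def)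
  text \<open>Both \<open>(r, c + 1)\<close> and \<open>(r + 1, c)\<close> would have to carry the entry \<open>k + 1\<close>.\<close>
  have right: "(r, Suc c) \<in> D" and below: "(Suc r, c) \<in> D"
    using down_closedD[OF D zD(1), of "(r, Suc c)"] down_closedD[OF D zD(1), of "(Suc r, c)"]
      \<open>r < r'\<close> \<open>c < c'\<close> by simp_all
  have "k < T (r, Suc c)" "T (r, Suc c) < Suc (Suc k)"
    using standard_tableau_less[OF T xD(1) right] standard_tableau_less[OF T right zD(1)]
      xD(2) zD(2) \<open>r < r'\<close> \<open>c < c'\<close> by (simp_all add: less_prod_def)
  moreover have "k < T (Suc r, c)" "T (Suc r, c) < Suc (Suc k)"
    using standard_tableau_less[OF T xD(1) below] standard_tableau_less[OF T below zD(1)]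
      xD(2) zD(2) \<open>r < r'\<close> \<open>c < c'\<close> by (simp_all add: less_prod_def)
  ultimately have "T (r, Suc c) = T (Suc r, c)"
    by simp
  then show False
    using numbering_inj[OF N right below] by simp
qed

lemma entry_content_1:
  assumes T: "standard_tableau D T" and D: "down_closed D" and "1 \<le> card D"
  shows "entry_content D T 1 = 0"
proof -
  have N: "numbering D T"
    using T by (rule standard_tableau_numbering)
  have x: "entry_cell D T 1 \<in> D" "T (entry_cell D T 1) = 1"
    using numbering_entry_cell[OF N, of 1] assms(3) by auto
  then have "(0, 0) \<in> D"
    using down_closedD[OF D] by (metis Pair_le prod.collapse zero_le)
  then have "\<not> (0, 0) < entry_cell D T 1"
    using standard_tableau_less[OF T _ x(1)] numbering_range[OF N] x(2) by fastforce
  then have "entry_cell D T 1 = (0, 0)"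
    by (metis Pair_le prod.collapse zero_le order.not_eq_order_implies_strict)
  then show ?thesis
    by (simp add: entry_content_def)
qed

lemma same_diagonal:
  assumes "int (snd x) - int (fst x) = int (snd y) - int (fst y)" "x \<noteq> y"
  shows "(fst x < fst y \<and> snd x < snd y) \<or> (fst y < fst x \<and> snd y < snd x)"
  using assms by (cases x; cases y) auto

text \<open>If the entries below \<open>k\<close> sit in the same cells of two standard tableaux, the entry \<open>k\<close>
  cannot sit strictly south-east of its position in the other one: the cell just above would be
  occupied by a smaller entry in both.\<close>

lemma entry_cell_not_south_east:
  assumes T: "standard_tableau D T" and T': "standard_tableau D' T'" and D': "down_closed D'"
    and k: "k \<in> {1..card D}" "card D' = card D"
    and below: "\<forall>j\<in>{1..<k}. entry_cell D T j = entry_cell D' T' j"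
    and lt: "fst (entry_cell D T k) < fst (entry_cell D' T' k)" "snd (entry_cell D T k) < snd (entry_cell D' T' k)"
  shows False
proof -
  have N: "numbering D T" and N': "numbering D' T'"
    using T T' by (simp_all add: standard_tableau_numbering)
  obtain r c r' c' where x: "entry_cell D T k = (r, c)" and x': "entry_cell D' T' k = (Suc r', c')"
    using lt by (metis less_nat_zero_code not0_implies_Suc prod.collapse)
  have xD: "(r, c) \<in> D" "T (r, c) = k"
    using numbering_entry_cell[OF N k(1)] unfolding x .
  have "k \<in> {1..card D'}"
    using k by simp
  note cell' = numbering_entry_cell[OF N' this]
  have xD': "(Suc r', c') \<in> D'" "T' (Suc r', c') = k"
    using cell' unfolding x' .
  have wD': "(r', c') \<in> D'"
    using down_closedD[OF D' xD'(1)] by simp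
  have "T' (r', c') < k"
    using standard_tableau_less[OF T' wD' xD'(1)] xD'(2) by (simp add: less_prod_def)
  then have j: "T' (r', c') \<in> {1..<k}"
    using numbering_range[OF N' wD'] by simp
  then have "entry_cell D T (T' (r', c')) = (r', c')"
    using below entry_cell_numbering[OF N' wD'] by simp
  then have wD: "(r', c') \<in> D" "T (r', c') = T' (r', c')"
    using numbering_entry_cell[OF N, of "T' (r', c')"] j k by auto
  have "(r, c) < (r', c')"
    using lt x x' by (simp add: less_prod_def)
  then show False
    using standard_tableau_less[OF T xD(1) wD(1)] xD(2) wD(2) j by simp
qed

lemma entry_cells_agree:
  assumes T: "standard_tableau D T" and T': "standard_tableau D' T'"
    and D: "down_closed D" and D': "down_closed D'" and card: "card D' = card D"
    and contents: "\<forall>k\<in>{1..card D}. entry_content D T k = entry_content D' T' k"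
  shows "k \<in> {1..card D} \<Longrightarrow> entry_cell D T k = entry_cell D' T' k"
proof (induction k rule: less_induct)
  case (less k)
  have below: "\<forall>j\<in>{1..<k}. entry_cell D T j = entry_cell D' T' j"
    using less by auto
  show ?case
  proof (rule ccontr)
    assume "entry_cell D T k \<noteq> entry_cell D' T' k"
    moreover have "int (snd (entry_cell D T k)) - int (fst (entry_cell D T k))
        = int (snd (entry_cell D' T' k)) - int (fst (entry_cell D' T' k))"
      using contents less.prems by (simp add: entry_content_def)
    ultimately show False
      using same_diagonal entry_cell_not_south_east[OF T T' D' less.prems card below]
        entry_cell_not_south_east[OF T' T D, of k] below less.prems card by fastforce
  qed
qed

lemma content_vector_determines_tableau:
  assumes T: "standard_tableau D T" and T': "standard_tableau D' T'"
    and D: "down_closed D" and D': "down_closed D'" and card: "card D' = card D"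
    and contents: "\<forall>k\<in>{1..card D}. entry_content D T k = entry_content D' T' k"
  shows "D = D'" "T = T'"
proof -
  have N: "numbering D T" and N': "numbering D' T'"
    using T T' by (simp_all add: standard_tableau_numbering)
  note agree = entry_cells_agree[OF assms]
  have "D = entry_cell D T ` {1..card D}"
    by (rule numbering_image_entry_cell[OF N])
  also have "\<dots> = entry_cell D' T' ` {1..card D'}"
    using agree card by (intro image_cong) auto
  also have "\<dots> = D'"
    by (rule numbering_image_entry_cell[OF N', symmetric])
  finally show "D = D'" .
  have "T x = T' x" for x
  proof (cases "x \<in> D")
    case True
    then have "T' (entry_cell D' T' (T x)) = T x"
      using numbering_entry_cell(2)[OF N'] numbering_range[OF N] card by simp
    then show ?thesis
      using agree[of "T x"] numbering_range[OF N True] entry_cell_numbering[OF N True] by simp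
  next
    case False
    then show ?thesis
      using numbering_outside[OF N] numbering_outside[OF N'] \<open>D = D'\<close> by simp
  qed
  then show "T = T'" ..
qed

definition corner :: "cell set \<Rightarrow> cell \<Rightarrow> bool" where
  "corner D x \<longleftrightarrow> x \<in> D \<and> (\<forall>y\<in>D. \<not> x < y)"

lemma corner_exists: "finite D \<Longrightarrow> D \<noteq> {} \<Longrightarrow> \<exists>x. corner D x"
  using finite_has_maximal[of D] by (auto simp: corner_def less_le)

lemma corner_remove: "corner D y \<Longrightarrow> y \<noteq> x \<Longrightarrow> corner (D - {x}) y"
  unfolding corner_def by auto

lemma down_closed_remove_corner: "down_closed D \<Longrightarrow> corner D x \<Longrightarrow> down_closed (D - {x})"
  unfolding down_closed_def corner_def by (metis Diff_iff order.strict_iff_order singletonD)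

lemma corner_largest_entry:
  assumes "standard_tableau D T" "x \<in> D" "T x = card D"
  shows "corner D x"
  using assms numbering_range[OF standard_tableau_numbering[OF assms(1)]] standard_tableau_less[OF assms(1)]
  by (fastforce simp: corner_def)

lemma standard_tableau_remove_largest:
  assumes T: "standard_tableau D T" and "finite D" "x \<in> D" "T x = card D"
  shows "standard_tableau (D - {x}) (T(x := 0))"
proof -
  have N: "numbering D T"
    using T by (rule standard_tableau_numbering)
  have card: "card (D - {x}) = card D - 1" "1 \<le> card D"
    using assms(2,3) card_gt_0_iff[of D] by (auto simp: card_Diff_singleton)
  have "bij_betw T (D - {x}) ({1..card D} - {card D})"
    by (rule bij_betw_DiffI) (use N assms card in \<open>simp_all add: numbering_def\<close>)
  moreover have "{1..card D} - {card D} = {1..card (D - {x})}"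
    using card by auto
  moreover have "bij_betw (T(x := 0)) (D - {x}) B = bij_betw T (D - {x}) B" for B
    by (rule bij_betw_cong) simp
  ultimately have "bij_betw (T(x := 0)) (D - {x}) {1..card (D - {x})}"
    by simp
  moreover have "(T(x := 0)) y = 0" if "y \<notin> D - {x}" for y
    using that numbering_outside[OF N, of y] by auto
  moreover have "(T(x := 0)) y < (T(x := 0)) z" if "y \<in> D - {x}" "z \<in> D - {x}" "y < z" for y z
    using that standard_tableau_less[OF T] by simp
  ultimately show ?thesis
    unfolding standard_tableau_def numbering_def by blast
qed

lemma standard_tableau_add_corner:
  assumes V: "standard_tableau (D - {x}) V" and x: "corner D x" and "finite D"
  shows "standard_tableau D (V(x := card D))"
proof -
  have N: "numbering (D - {x}) V"
    using V by (rule standard_tableau_numbering)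
  have xD: "x \<in> D" "\<forall>y\<in>D. \<not> x < y"
    using x by (simp_all add: corner_def)
  have card: "card (D - {x}) = card D - 1" "1 \<le> card D"
    using assms(3) xD(1) card_gt_0_iff[of D] by (auto simp: card_Diff_singleton)
  have "bij_betw (V(x := card D)) (D - {x}) {1..card D - 1} = bij_betw V (D - {x}) {1..card D - 1}"
    by (rule bij_betw_cong) simp
  then have "bij_betw (V(x := card D)) (D - {x}) {1..card D - 1}"
    using N card(1) by (simp add: numbering_def)
  then have "bij_betw (V(x := card D)) ((D - {x}) \<union> {x}) ({1..card D - 1} \<union> {card D})"
    using notIn_Un_bij_betw[of x "D - {x}" "V(x := card D)" "{1..card D - 1}"] card(2) by simp
  moreover have "(D - {x}) \<union> {x} = D" "{1..card D - 1} \<union> {card D} = {1..card D}"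
    using xD(1) card(2) by auto
  ultimately have bij: "bij_betw (V(x := card D)) D {1..card D}"
    by simp
  have small: "V y < card D" if "y \<in> D - {x}" for y
    using numbering_range[OF N that] card by auto
  have "(V(x := card D)) y < (V(x := card D)) z" if "y \<in> D" "z \<in> D" "y < z" for y z
    using that xD small standard_tableau_less[OF V, of y z] by (cases "z = x") auto
  then show ?thesis
    using bij numbering_outside[OF N] xD(1) by (auto simp: standard_tableau_def numbering_def)
qed

lemma standard_tableau_exists: "finite D \<Longrightarrow> down_closed D \<Longrightarrow> \<exists>T. standard_tableau D T"
proof (induction "card D" arbitrary: D)
  case 0
  then have "standard_tableau D (\<lambda>_. 0)"
    by (simp add: standard_tableau_def numbering_def bij_betw_def)
  then show ?case
    by blast
next
  case (Suc m)
  then obtain x where x: "corner D x"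
    using corner_exists by fastforce
  then have "m = card (D - {x})" "down_closed (D - {x})"
    using Suc down_closed_remove_corner by (auto simp: corner_def)
  then obtain V where "standard_tableau (D - {x}) V"
    using Suc by blast
  then show ?case
    using standard_tableau_add_corner[OF _ x Suc.prems(1)] by blast
qed

definition tableau_step :: "cell set \<Rightarrow> (cell \<Rightarrow> nat) \<Rightarrow> (cell \<Rightarrow> nat) \<Rightarrow> bool" where
  "tableau_step D T U \<longleftrightarrow> standard_tableau D T \<and> standard_tableau D U
     \<and> (\<exists>k. 1 \<le> k \<and> Suc k \<le> card D \<and> U = adj_transp k \<circ> T)"

lemma tableau_step_extend:
  assumes "finite D" "corner D x" "tableau_step (D - {x}) V W"
  shows "tableau_step D (V(x := card D)) (W(x := card D))"
proof -
  obtain k where k: "1 \<le> k" "Suc k \<le> card (D - {x})" "W = adj_transp k \<circ> V"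
    using assms(3) unfolding tableau_step_def by blast
  have card: "card (D - {x}) = card D - 1"
    using assms(2) by (simp add: corner_def card_Diff_singleton)
  have "standard_tableau D (V(x := card D))" "standard_tableau D (W(x := card D))"
    using assms(3) standard_tableau_add_corner[OF _ assms(2,1)] unfolding tableau_step_def by blast+
  moreover have "W(x := card D) = adj_transp k \<circ> V(x := card D)"
    using k card by (auto simp: fun_eq_iff Transposition.transpose_def)
  ultimately show ?thesis
    using k card unfolding tableau_step_def by auto
qed

lemma tableau_path_extend:
  assumes "finite D" "corner D x" "(tableau_step (D - {x}))\<^sup>*\<^sup>* V W"
  shows "(tableau_step D)\<^sup>*\<^sup>* (V(x := card D)) (W(x := card D))"
  using assms(3)
proof (induction rule: rtranclp_induct)
  case (step W Z)
  then show ?case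
    using tableau_step_extend[OF assms(1,2)] rtranclp.rtrancl_into_rtrancl by metis
qed simp

lemma standard_tableau_largest_corner:
  assumes T: "standard_tableau D T" and "finite D" "D \<noteq> {}"
  obtains x where "corner D x" "T x = card D" "standard_tableau (D - {x}) (T(x := 0))"
proof -
  have "card D \<in> {1..card D}"
    using assms(2,3) card_gt_0_iff[of D] by auto
  then have x: "entry_cell D T (card D) \<in> D" "T (entry_cell D T (card D)) = card D"
    using numbering_entry_cell[OF standard_tableau_numbering[OF T]] by blast+
  show ?thesis
    using that corner_largest_entry[OF T x] standard_tableau_remove_largest[OF T assms(2) x] x(2) by blast
qed

text \<open>Fill the cells other than the corners \<open>x \<noteq> y\<close> arbitrarily and put the two largest
  entries into \<open>x\<close>, \<open>y\<close> in either order.\<close>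

lemma tableau_step_swap_corners:
  assumes D: "finite D" "down_closed D" and x: "corner D x" and y: "corner D y" and "x \<noteq> y"
  obtains V V' where "standard_tableau (D - {x}) V" "standard_tableau (D - {y}) V'"
    "tableau_step D (V(x := card D)) (V'(y := card D))"
proof -
  define m where "m = card D - 1"
  have xy: "x \<in> D" "y \<in> D" "corner (D - {x}) y" "corner (D - {y}) x"
    using x y corner_remove \<open>x \<noteq> y\<close> by (auto simp: corner_def)
  have card: "card (D - {x}) = m" "card (D - {y}) = m" "card (D - {x} - {y}) = m - 1" "1 \<le> m"
    using xy \<open>x \<noteq> y\<close> D card_mono[OF D(1), of "{x, y}"] by (auto simp: m_def card_Diff_singleton)
  have "finite (D - {x} - {y})" "down_closed (D - {x} - {y})"
    using D(1) down_closed_remove_corner[OF down_closed_remove_corner[OF D(2) x] xy(3)] by simp_all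
  then obtain W where W: "standard_tableau (D - {x} - {y}) W"
    using standard_tableau_exists by blast
  have "D - {y} - {x} = D - {x} - {y}"
    by blast
  then have std: "standard_tableau (D - {x}) (W(y := m))" "standard_tableau (D - {y}) (W(x := m))"
    using standard_tableau_add_corner[OF _ xy(3), of W] standard_tableau_add_corner[OF _ xy(4), of W]
      W D card by simp_all
  have small: "W z < m" for z
    using numbering_range[OF standard_tableau_numbering[OF W], of z]
      numbering_outside[OF standard_tableau_numbering[OF W], of z] card by (cases "z \<in> D - {x} - {y}") auto
  have pointwise: "((W(x := m))(y := card D)) z = (adj_transp m \<circ> (W(y := m))(x := card D)) z" for z
    using small[of z] \<open>x \<noteq> y\<close> card by (auto simp: Transposition.transpose_def m_def)
  have "standard_tableau D ((W(y := m))(x := card D))" "standard_tableau D ((W(x := m))(y := card D))"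
    using standard_tableau_add_corner x y D std by blast+
  moreover have "(W(x := m))(y := card D) = adj_transp m \<circ> (W(y := m))(x := card D)"
    by (rule ext) (rule pointwise)
  ultimately have "tableau_step D ((W(y := m))(x := card D)) ((W(x := m))(y := card D))"
    using card unfolding tableau_step_def m_def by auto
  then show ?thesis
    using that std by blast
qed

lemma standard_tableaux_connected:
  "finite D \<Longrightarrow> down_closed D \<Longrightarrow> standard_tableau D T \<Longrightarrow> standard_tableau D U \<Longrightarrow>
   (tableau_step D)\<^sup>*\<^sup>* T U"
proof (induction "card D" arbitrary: D T U)
  case 0
  then have "T z = U z" for z
    using numbering_outside[OF standard_tableau_numbering[OF "0.prems"(3)], of z]
      numbering_outside[OF standard_tableau_numbering[OF "0.prems"(4)], of z] by simp
  then show ?case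
    by (simp add: fun_eq_iff)
next
  case (Suc m)
  note D = Suc.prems(1,2)
  have "D \<noteq> {}"
    using Suc.hyps(2) by auto
  obtain x where x: "corner D x" "T x = card D" "standard_tableau (D - {x}) (T(x := 0))"
    using standard_tableau_largest_corner[OF Suc.prems(3,1) \<open>D \<noteq> {}\<close>] by blast
  obtain y where y: "corner D y" "U y = card D" "standard_tableau (D - {y}) (U(y := 0))"
    using standard_tableau_largest_corner[OF Suc.prems(4,1) \<open>D \<noteq> {}\<close>] by blast
  have T: "(T(x := 0))(x := card D) = T" and U: "(U(y := 0))(y := card D) = U"
    using x(2) y(2) by (simp_all add: fun_eq_iff)
  have path: "(tableau_step D)\<^sup>*\<^sup>* (V(z := card D)) (V'(z := card D))"
    if "corner D z" "standard_tableau (D - {z}) V" "standard_tableau (D - {z}) V'" for z V V'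
  proof (rule tableau_path_extend[OF D(1) that(1)], rule Suc.hyps(1))
    show "m = card (D - {z})" "finite (D - {z})" "down_closed (D - {z})"
      using that Suc.hyps(2) D down_closed_remove_corner by (auto simp: corner_def card_Diff_singleton)
  qed (use that in simp_all)
  show ?case
  proof (cases "x = y")
    case True
    have "(tableau_step D)\<^sup>*\<^sup>* ((T(x := 0))(x := card D)) ((U(y := 0))(y := card D))"
      using path[OF x(1) x(3), of "U(y := 0)"] y(3) True by simp
    then show ?thesis
      by (simp only: T U)
  next
    case False
    obtain V V' where "standard_tableau (D - {x}) V" "standard_tableau (D - {y}) V'"
      and step: "tableau_step D (V(x := card D)) (V'(y := card D))"
      using tableau_step_swap_corners[OF D x(1) y(1) False] by blast
    then have "(tableau_step D)\<^sup>*\<^sup>* T (V(x := card D))" "(tableau_step D)\<^sup>*\<^sup>* (V'(y := card D)) U"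
      using path[OF x(1) x(3)] path[OF y(1) _ y(3)] unfolding T U by blast+
    with step show ?thesis
      by (meson rtranclp.rtrancl_into_rtrancl rtranclp_trans)
  qed
qed

section \<open>Young's orthogonal form\<close>

definition young_diag :: "int \<Rightarrow> complex" where
  "young_diag r = complex_of_real (1 / real_of_int r)"

definition young_offdiag :: "int \<Rightarrow> complex" where
  "young_offdiag r = complex_of_real (sqrt (1 - 1 / (real_of_int r)\<^sup>2))"

lemma young_diag_uminus: "young_diag (- r) = - young_diag r"
  by (simp add: young_diag_def)

lemma young_offdiag_uminus: "young_offdiag (- r) = young_offdiag r"
  by (simp add: young_offdiag_def)

lemma young_diag_mult: "r \<noteq> 0 \<Longrightarrow> young_diag r * of_int r = 1"
  by (simp add: young_diag_def)

lemma young_offdiag_square: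
  assumes "r \<noteq> 0"
  shows "(young_offdiag r)\<^sup>2 = 1 - (young_diag r)\<^sup>2"
proof -
  have "1 \<le> \<bar>real_of_int r\<bar>"
    using assms by linarith
  then have "1 \<le> (real_of_int r)\<^sup>2"
    using power_mono[of 1 "\<bar>real_of_int r\<bar>" 2] by simp
  then have "(sqrt (1 - 1 / (real_of_int r)\<^sup>2))\<^sup>2 = 1 - (1 / real_of_int r)\<^sup>2"
    by (simp add: power_divide divide_le_eq_1)
  then show ?thesis
    unfolding young_offdiag_def young_diag_def by (metis of_real_1 of_real_diff of_real_power)
qed

lemma young_offdiag_eq_0: "\<bar>r\<bar> = 1 \<Longrightarrow> young_offdiag r = 0"
  by (auto simp: young_offdiag_def abs_if split: if_splits)

lemma young_offdiag_nonzero: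
  assumes "\<bar>r\<bar> \<ge> 2"
  shows "young_offdiag r \<noteq> 0"
proof -
  have "4 \<le> (real_of_int r)\<^sup>2"
    using assms power_mono[of 2 "\<bar>real_of_int r\<bar>" 2] by simp
  then show ?thesis
    by (simp add: young_offdiag_def)
qed

text \<open>Young's orthogonal form \<open>s\<^sub>k e\<^sub>V = \<rho>\<^sup>-\<^sup>1 e\<^sub>V + (1 - \<rho>\<^sup>-\<^sup>2)\<^sup>1\<^sup>/\<^sup>2 e\<^bsub>s\<^sub>k V\<^esub>\<close>, with \<open>\<rho>\<close>
  the axial distance of \<open>k\<close> and \<open>k + 1\<close> in \<open>V\<close>, acting on coordinate functions \<open>F\<close> of
  vectors \<open>\<Sum>\<^sub>V F V e\<^sub>V\<close>.\<close>

definition young_op :: "cell set \<Rightarrow> nat \<Rightarrow> ((cell \<Rightarrow> nat) \<Rightarrow> complex) \<Rightarrow> (cell \<Rightarrow> nat) \<Rightarrow> complex" where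
  "young_op D k F V = young_diag (axial_dist D V k) * F V
     + young_offdiag (axial_dist D V k) * F (adj_transp k \<circ> V)"

lemma young_offdiag_inadmissible:
  assumes "standard_tableau D V" "down_closed D" "1 \<le> k" "Suc k \<le> card D"
    and "\<not> standard_tableau D (adj_transp k \<circ> V)"
  shows "young_offdiag (axial_dist D V k) = 0"
  using assms axial_dist_comparable standard_tableau_adj_transp_iff young_offdiag_eq_0 by blast

lemma young_offdiag_admissible:
  assumes "standard_tableau D V" "1 \<le> k" "Suc k \<le> card D" "standard_tableau D (adj_transp k \<circ> V)"
  shows "young_offdiag (axial_dist D V k) \<noteq> 0"
  using assms axial_dist_incomparable standard_tableau_adj_transp_iff young_offdiag_nonzero by blast

lemma young_op_cong:
  assumes "standard_tableau D V" "down_closed D" "1 \<le> k" "Suc k \<le> card D"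
    and "\<And>U. standard_tableau D U \<Longrightarrow> F U = G U"
  shows "young_op D k F V = young_op D k G V"
  using assms young_offdiag_inadmissible[OF assms(1-4)] by (cases "standard_tableau D (adj_transp k \<circ> V)") (simp_all add: young_op_def)

lemma young_op_square:
  assumes V: "standard_tableau D V" and D: "down_closed D" and k: "1 \<le> k" "Suc k \<le> card D"
  shows "young_op D k (young_op D k F) V = F V"
proof -
  have "axial_dist D (adj_transp k \<circ> V) k = - axial_dist D V k"
    using axial_dist_adj_transp[OF standard_tableau_numbering[OF V] k] .
  then have "young_op D k (young_op D k F) V
      = ((young_diag (axial_dist D V k))\<^sup>2 + (young_offdiag (axial_dist D V k))\<^sup>2) * F V"
    by (simp add: young_op_def young_diag_uminus young_offdiag_uminus transpose_comp_cancel algebra_simps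
        power2_eq_square)
  also have "\<dots> = F V"
    using young_offdiag_square[OF axial_dist_nonzero[OF V D k]] by simp
  finally show ?thesis .
qed

lemma young_op_comm:
  assumes V: "numbering D V" and ij: "1 \<le> i" "Suc i < j" "Suc j \<le> card D"
  shows "young_op D i (young_op D j F) V = young_op D j (young_op D i F) V"
proof -
  have "axial_dist D (adj_transp i \<circ> V) j = axial_dist D V j" "axial_dist D (adj_transp j \<circ> V) i = axial_dist D V i"
    using V ij by (simp_all add: axial_dist_def entry_content_adj_transp Transposition.transpose_def)
  moreover have "adj_transp j \<circ> (adj_transp i \<circ> V) = adj_transp i \<circ> (adj_transp j \<circ> V)"
    using ij by (auto simp: fun_eq_iff Transposition.transpose_def)
  ultimately show ?thesis
    by (simp add: young_op_def algebra_simps)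
qed

lemma young_op_braid:
  assumes V: "standard_tableau D V" and D: "down_closed D" and k: "1 \<le> k" "Suc (Suc k) \<le> card D"
  shows "young_op D k (young_op D (Suc k) (young_op D k F)) V
       = young_op D (Suc k) (young_op D k (young_op D (Suc k) F)) V"
proof -
  define a b c where "a = entry_content D V k" and "b = entry_content D V (Suc k)"
    and "c = entry_content D V (Suc (Suc k))"
  have ab: "b - a \<noteq> 0" and bc: "c - b \<noteq> 0" and ac: "c - a \<noteq> 0"
    using entry_content_neq_Suc[OF V D, of k] entry_content_neq_Suc[OF V D, of "Suc k"]
      entry_content_neq_Suc_Suc[OF V D k] k by (auto simp: a_def b_def c_def)
  text \<open>Beyond \<open>s\<^sub>k\<^sup>2 = 1\<close>, the braid relation amounts to these partial fraction identities.\<close>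
  have e1: "young_diag (b - a) * (young_diag (c - b) - young_diag (c - a)) = young_diag (c - b) * young_diag (c - a)"
    and e2: "young_diag (c - b) * (young_diag (b - a) - young_diag (c - a)) = young_diag (b - a) * young_diag (c - a)"
    using ab bc ac unfolding young_diag_def by (simp_all add: field_simps)
  have q1: "(young_offdiag (b - a))\<^sup>2 = 1 - (young_diag (b - a))\<^sup>2"
    and q2: "(young_offdiag (c - b))\<^sup>2 = 1 - (young_diag (c - b))\<^sup>2"
    using young_offdiag_square[OF ab] young_offdiag_square[OF bc] .
  have swap: "young_diag (a - b) = - young_diag (b - a)" "young_diag (b - c) = - young_diag (c - b)"
    "young_diag (a - c) = - young_diag (c - a)" "young_offdiag (a - b) = young_offdiag (b - a)"
    "young_offdiag (b - c) = young_offdiag (c - b)" "young_offdiag (a - c) = young_offdiag (c - a)"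
    using young_diag_uminus young_offdiag_uminus minus_diff_eq by metis+
  have braid: "adj_transp (Suc k) \<circ> (adj_transp k \<circ> (adj_transp (Suc k) \<circ> V))
      = adj_transp k \<circ> (adj_transp (Suc k) \<circ> (adj_transp k \<circ> V))"
    by (auto simp: fun_eq_iff Transposition.transpose_def)
  show ?thesis
    unfolding young_op_def axial_dist_def
    using standard_tableau_numbering[OF V] k
    apply (simp add: numbering_adj_transp entry_content_adj_transp Transposition.transpose_def braid
        transpose_comp_cancel flip: a_def b_def c_def)
    apply (simp only: swap)
    using e1 e2 q1 q2 by algebra
qed

lemma young_op_jucys_murphy:
  assumes V: "standard_tableau D V" and D: "down_closed D" and k: "1 \<le> k" "Suc k \<le> card D"
  shows "young_op D k (\<lambda>W. of_int (entry_content D W k) * young_op D k F W) V + young_op D k F V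
       = of_int (entry_content D V (Suc k)) * F V"
proof -
  define a b where "a = entry_content D V k" and "b = entry_content D V (Suc k)"
  have ab: "b - a \<noteq> 0"
    using entry_content_neq_Suc[OF V D k] by (simp add: a_def b_def)
  have q: "(young_offdiag (b - a))\<^sup>2 = 1 - (young_diag (b - a))\<^sup>2"
    by (rule young_offdiag_square[OF ab])
  have m: "young_diag (b - a) * (of_int b - of_int a) = 1"
    using young_diag_mult[OF ab] by simp
  have swap: "young_diag (a - b) = - young_diag (b - a)" "young_offdiag (a - b) = young_offdiag (b - a)"
    using young_diag_uminus young_offdiag_uminus minus_diff_eq by metis+
  show ?thesis
    unfolding young_op_def axial_dist_def
    using standard_tableau_numbering[OF V] k
    apply (simp add: numbering_adj_transp entry_content_adj_transp Transposition.transpose_def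
        transpose_comp_cancel flip: a_def b_def)
    apply (simp only: swap)
    using q m by algebra
qed

section \<open>Partitions\<close>

lemma cells_eq_UN: "cells \<mu> = (\<Union>r<length \<mu>. {r} \<times> {..<\<mu> ! r})"
  by (auto simp: cells_def)

lemma finite_cells: "finite (cells \<mu>)"
  by (simp add: cells_eq_UN)

lemma card_cells: "card (cells \<mu>) = sum_list \<mu>"
proof -
  have "card (cells \<mu>) = (\<Sum>r<length \<mu>. card ({r} \<times> {..<\<mu> ! r}))"
    unfolding cells_eq_UN by (rule card_UN_disjoint) auto
  also have "\<dots> = sum_list \<mu>"
    by (simp add: sum_list_sum_nth atLeast0LessThan)
  finally show ?thesis .
qed

lemma down_closed_cells:
  assumes "sorted_wrt (\<ge>) \<mu>"
  shows "down_closed (cells \<mu>)"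
  unfolding down_closed_def
proof (intro ballI allI impI)
  fix y x :: cell
  assume "y \<in> cells \<mu>" "x \<le> y"
  moreover have "\<mu> ! fst y \<le> \<mu> ! fst x" if "fst y < length \<mu>" "fst x \<le> fst y"
    using assms that by (cases "fst x = fst y") (auto simp: sorted_wrt_iff_nth_less)
  ultimately show "x \<in> cells \<mu>"
    by (cases x, cases y) (auto simp: cells_def)
qed

lemma cells_inj:
  assumes "0 \<notin> set \<mu>" "0 \<notin> set \<mu>'" "cells \<mu> = cells \<mu>'"
  shows "\<mu> = \<mu>'"
proof -
  have len: "r < length \<mu> \<longleftrightarrow> (r, 0) \<in> cells \<mu>" if "0 \<notin> set \<mu>" for \<mu> :: "nat list" and r
    using that by (auto simp: cells_def) (metis gr0I nth_mem)
  have L: "length \<mu> = length \<mu>'"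
    using len[OF assms(1)] len[OF assms(2)] assms(3) by (metis linorder_neqE_nat less_irrefl)
  show ?thesis
  proof (rule nth_equalityI[OF L])
    fix r
    assume "r < length \<mu>"
    then have "c < \<mu> ! r \<longleftrightarrow> c < \<mu>' ! r" for c
      using assms(3) L unfolding cells_def by (metis (no_types, lifting) case_prod_conv mem_Collect_eq)
    then show "\<mu> ! r = \<mu>' ! r"
      by (metis linorder_neqE_nat less_irrefl)
  qed
qed

lemma syt_eq: "sorted_wrt (\<ge>) \<mu> \<Longrightarrow> syt \<mu> = {T. standard_tableau (cells \<mu>) T}"
  by (simp add: syt_def standard_tableau_iff_rows_columns[OF down_closed_cells] numbering_def card_cells)

lemma content_eq: "content \<mu> T k = entry_content (cells \<mu>) T k"
  by (simp add: content_def entry_content_def entry_cell_def Let_def)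

lemma finite_syt: "finite (syt \<mu>)"
proof -
  have "syt \<mu> \<subseteq> {f. \<forall>x. (x \<in> cells \<mu> \<longrightarrow> f x \<in> {1..sum_list \<mu>}) \<and> (x \<notin> cells \<mu> \<longrightarrow> f x = 0)}"
    unfolding syt_def bij_betw_def by blast
  moreover have "finite {f. \<forall>x. (x \<in> cells \<mu> \<longrightarrow> f x \<in> {1..sum_list \<mu>}) \<and> (x \<notin> cells \<mu> \<longrightarrow> f x = (0::nat))}"
    by (rule finite_set_of_finite_funs) (simp_all add: finite_cells)
  ultimately show ?thesis
    by (rule finite_subset)
qed

lemma tab_bij: "bij_betw (tab \<mu>) {1..dim \<mu>} (syt \<mu>)"
proof -
  have "\<exists>f. bij_betw f {1..dim \<mu>} (syt \<mu>)"
    unfolding dim_def by (rule ex_bij_betw_nat_finite_1[OF finite_syt])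
  then show ?thesis
    unfolding tab_def by (rule someI_ex)
qed

lemma dim_pos: "is_partition p \<mu> \<Longrightarrow> dim \<mu> \<ge> 1"
  using standard_tableau_exists[OF finite_cells down_closed_cells] finite_syt[of \<mu>]
  by (fastforce simp: is_partition_def dim_def syt_eq Suc_le_eq card_gt_0_iff)

section \<open>Young's orthogonal representation\<close>

text \<open>Square matrices indexed by \<open>{1..n}\<close>, made a monoid by forcing entries outside to vanish.\<close>

definition mat_mult :: "nat \<Rightarrow> (nat \<Rightarrow> nat \<Rightarrow> complex) \<Rightarrow> (nat \<Rightarrow> nat \<Rightarrow> complex) \<Rightarrow> nat \<Rightarrow> nat \<Rightarrow> complex" where
  "mat_mult n A B = (\<lambda>a b. if a \<in> {1..n} \<and> b \<in> {1..n} then matmul n A B a b else 0)"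

definition mat_one :: "nat \<Rightarrow> nat \<Rightarrow> nat \<Rightarrow> complex" where
  "mat_one n = (\<lambda>a b. if a \<in> {1..n} \<and> a = b then 1 else 0)"

definition mats :: "nat \<Rightarrow> (nat \<Rightarrow> nat \<Rightarrow> complex) set" where
  "mats n = {A. \<forall>a b. \<not> (a \<in> {1..n} \<and> b \<in> {1..n}) \<longrightarrow> A a b = 0}"

lemma mat_mult_assoc: "mat_mult n (mat_mult n A B) C = mat_mult n A (mat_mult n B C)"
proof (intro ext)
  fix a b
  have "(\<Sum>c\<in>{1..n}. (\<Sum>d\<in>{1..n}. A a d * B d c) * C c b)
      = (\<Sum>d\<in>{1..n}. A a d * (\<Sum>c\<in>{1..n}. B d c * C c b))"
    by (simp add: sum_distrib_left sum_distrib_right mult.assoc) (rule sum.swap)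
  then show "mat_mult n (mat_mult n A B) C a b = mat_mult n A (mat_mult n B C) a b"
    by (auto simp: mat_mult_def matmul_def intro!: sum.cong)
qed

lemma mat_mult_in: "mat_mult n A B \<in> mats n"
  by (simp add: mat_mult_def mats_def)

lemma mat_one_in: "mat_one n \<in> mats n"
  by (simp add: mat_one_def mats_def)

lemma mat_one_left: "A \<in> mats n \<Longrightarrow> mat_mult n (mat_one n) A = A"
  unfolding mats_def mat_mult_def matmul_def mat_one_def
  by (auto simp: fun_eq_iff if_distrib[of "\<lambda>x. x * _"] cong: if_cong)

lemma mat_one_right: "A \<in> mats n \<Longrightarrow> mat_mult n A (mat_one n) = A"
  unfolding mats_def mat_mult_def matmul_def mat_one_def
  by (auto simp: fun_eq_iff if_distrib[of "\<lambda>x. _ * x"] cong: if_cong)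

lemma mats_eqI:
  assumes "A \<in> mats n" "B \<in> mats n" "\<And>a b. a \<in> {1..n} \<Longrightarrow> b \<in> {1..n} \<Longrightarrow> A a b = B a b"
  shows "A = B"
proof (intro ext)
  fix a b
  show "A a b = B a b"
    using assms unfolding mats_def by (cases "a \<in> {1..n} \<and> b \<in> {1..n}") auto
qed

locale partition_shape =
  fixes \<mu> :: "nat list" and p :: nat
  assumes partition: "is_partition p \<mu>"
begin

lemma sum_list_shape: "sum_list \<mu> = p"
  using partition by (simp add: is_partition_def)

lemma down_closed_shape: "down_closed (cells \<mu>)"
  using partition down_closed_cells by (simp add: is_partition_def)

lemma card_shape: "card (cells \<mu>) = p"
  by (simp add: card_cells sum_list_shape)

lemma syt_shape: "syt \<mu> = {T. standard_tableau (cells \<mu>) T}"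
  using partition syt_eq by (simp add: is_partition_def)

definition tab_index :: "(cell \<Rightarrow> nat) \<Rightarrow> nat" where
  "tab_index = the_inv_into {1..dim \<mu>} (tab \<mu>)"

lemma standard_tableau_tab: "a \<in> {1..dim \<mu>} \<Longrightarrow> standard_tableau (cells \<mu>) (tab \<mu> a)"
  using tab_bij[of \<mu>] unfolding bij_betw_def syt_shape by blast

lemma tab_inj: "a \<in> {1..dim \<mu>} \<Longrightarrow> b \<in> {1..dim \<mu>} \<Longrightarrow> tab \<mu> a = tab \<mu> b \<Longrightarrow> a = b"
  using tab_bij[of \<mu>] unfolding bij_betw_def inj_on_def by blast

lemma tab_index_tab: "a \<in> {1..dim \<mu>} \<Longrightarrow> tab_index (tab \<mu> a) = a"
  unfolding tab_index_def using tab_bij[of \<mu>] by (simp add: bij_betw_def the_inv_into_f_f)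

lemma tab_index_in: "standard_tableau (cells \<mu>) U \<Longrightarrow> tab_index U \<in> {1..dim \<mu>}"
  unfolding tab_index_def using tab_bij[of \<mu>]
  by (metis bij_betw_def mem_Collect_eq syt_shape the_inv_into_into order_refl)

lemma tab_tab_index: "standard_tableau (cells \<mu>) U \<Longrightarrow> tab \<mu> (tab_index U) = U"
  unfolding tab_index_def using tab_bij[of \<mu>]
  by (metis bij_betw_def mem_Collect_eq syt_shape f_the_inv_into_f)

lemma young_gen_eq:
  "young_gen \<mu> k a c = (if a = c then young_diag (axial_dist (cells \<mu>) (tab \<mu> c) k)
     else if tab \<mu> a = adj_transp k \<circ> tab \<mu> c then young_offdiag (axial_dist (cells \<mu>) (tab \<mu> c) k) else 0)"
  by (simp add: young_gen_def Let_def content_eq axial_dist_def young_diag_def young_offdiag_def o_def)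

lemma young_gen_sum:
  assumes a: "a \<in> {1..dim \<mu>}" and k: "1 \<le> k" "Suc k \<le> p"
  shows "(\<Sum>c\<in>{1..dim \<mu>}. young_gen \<mu> k a c * h c) = young_op (cells \<mu>) k (h \<circ> tab_index) (tab \<mu> a)"
proof -
  define V where "V = tab \<mu> a"
  have V: "standard_tableau (cells \<mu>) V" and kD: "1 \<le> k" "Suc k \<le> card (cells \<mu>)"
    using standard_tableau_tab[OF a] k by (simp_all add: V_def card_shape)
  have "(adj_transp k \<circ> V) (entry_cell (cells \<mu>) V k) \<noteq> V (entry_cell (cells \<mu>) V k)"
    using numbering_entry_cell[OF standard_tableau_numbering[OF V], of k] kD by simp
  then have ne: "adj_transp k \<circ> V \<noteq> V"
    by metis
  let ?off = "\<lambda>c. if tab \<mu> c = adj_transp k \<circ> V then young_offdiag (axial_dist (cells \<mu>) (tab \<mu> c) k) * h c else 0"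
  have "young_gen \<mu> k a c * h c = (if c = a then young_diag (axial_dist (cells \<mu>) V k) * h a else 0) + ?off c"
    if "c \<in> {1..dim \<mu>}" for c
    using ne by (auto simp: young_gen_eq V_def)
  then have "(\<Sum>c\<in>{1..dim \<mu>}. young_gen \<mu> k a c * h c)
      = young_diag (axial_dist (cells \<mu>) V k) * h a + (\<Sum>c\<in>{1..dim \<mu>}. ?off c)"
    using a by (simp add: sum.distrib)
  also have "(\<Sum>c\<in>{1..dim \<mu>}. ?off c) = young_offdiag (axial_dist (cells \<mu>) V k) * h (tab_index (adj_transp k \<circ> V))"
  proof (cases "standard_tableau (cells \<mu>) (adj_transp k \<circ> V)")
    case True
    have "?off c = (if c = tab_index (adj_transp k \<circ> V)
        then young_offdiag (axial_dist (cells \<mu>) V k) * h (tab_index (adj_transp k \<circ> V)) else 0)"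
      if "c \<in> {1..dim \<mu>}" for c
      using that True tab_index_tab[OF that] tab_tab_index axial_dist_adj_transp[OF standard_tableau_numbering[OF V] kD]
      by (auto simp: young_offdiag_uminus)
    then show ?thesis
      using tab_index_in[OF True] by simp
  next
    case False
    then have "?off c = 0" if "c \<in> {1..dim \<mu>}" for c
      using standard_tableau_tab[OF that] by auto
    then show ?thesis
      using young_offdiag_inadmissible[OF V down_closed_shape kD False] by simp
  qed
  finally show ?thesis
    using a by (simp add: young_op_def V_def tab_index_tab)
qed

definition young_gen_mat :: "nat \<Rightarrow> nat \<Rightarrow> nat \<Rightarrow> complex" where
  "young_gen_mat k = (\<lambda>a b. if a \<in> {1..dim \<mu>} \<and> b \<in> {1..dim \<mu>} then young_gen \<mu> k a b else 0)"

text \<open>Relations between the matrices \<open>young_gen_mat k\<close> are checked column by column: a column read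
  as a function on tableaux is acted on by \<open>young_op\<close>, whose relations hold pointwise.\<close>

definition column_fun :: "(nat \<Rightarrow> nat \<Rightarrow> complex) \<Rightarrow> nat \<Rightarrow> ((cell \<Rightarrow> nat) \<Rightarrow> complex) \<Rightarrow> bool" where
  "column_fun B b F \<longleftrightarrow> (\<forall>U. standard_tableau (cells \<mu>) U \<longrightarrow> B (tab_index U) b = F U)"

lemma column_funD: "column_fun B b F \<Longrightarrow> a \<in> {1..dim \<mu>} \<Longrightarrow> B a b = F (tab \<mu> a)"
  unfolding column_fun_def using standard_tableau_tab tab_index_tab by metis

lemma column_fun_young_gen_mat:
  assumes b: "b \<in> {1..dim \<mu>}" and k: "1 \<le> k" "Suc k \<le> p"
  shows "column_fun (young_gen_mat k) b (young_op (cells \<mu>) k (\<lambda>U. of_bool (tab_index U = b)))"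
  unfolding column_fun_def
proof (intro allI impI)
  fix U
  assume U: "standard_tableau (cells \<mu>) U"
  have "young_gen_mat k (tab_index U) b = (\<Sum>c\<in>{1..dim \<mu>}. young_gen \<mu> k (tab_index U) c * of_bool (c = b))"
    using b tab_index_in[OF U] by (simp add: young_gen_mat_def)
  also have "\<dots> = young_op (cells \<mu>) k (\<lambda>U. of_bool (tab_index U = b)) U"
    using young_gen_sum[OF tab_index_in[OF U] k] tab_tab_index[OF U] by (simp add: o_def)
  finally show "young_gen_mat k (tab_index U) b = young_op (cells \<mu>) k (\<lambda>U. of_bool (tab_index U = b)) U" .
qed

lemma column_fun_mult:
  assumes b: "b \<in> {1..dim \<mu>}" and k: "1 \<le> k" "Suc k \<le> p" and B: "column_fun B b F"
  shows "column_fun (mat_mult (dim \<mu>) (young_gen_mat k) B) b (young_op (cells \<mu>) k F)"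
  unfolding column_fun_def
proof (intro allI impI)
  fix U
  assume U: "standard_tableau (cells \<mu>) U"
  have kD: "1 \<le> k" "Suc k \<le> card (cells \<mu>)"
    using k card_shape by auto
  have "mat_mult (dim \<mu>) (young_gen_mat k) B (tab_index U) b = young_op (cells \<mu>) k (\<lambda>V. B (tab_index V) b) U"
    using young_gen_sum[OF tab_index_in[OF U] k, of "\<lambda>c. B c b"] tab_index_in[OF U] tab_tab_index[OF U] b
    by (simp add: mat_mult_def matmul_def young_gen_mat_def o_def)
  also have "\<dots> = young_op (cells \<mu>) k F U"
    using B by (intro young_op_cong[OF U down_closed_shape kD]) (simp add: column_fun_def)
  finally show "mat_mult (dim \<mu>) (young_gen_mat k) B (tab_index U) b = young_op (cells \<mu>) k F U" .
qed

lemma young_gen_mat_in: "young_gen_mat k \<in> mats (dim \<mu>)"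
  by (simp add: young_gen_mat_def mats_def)

lemma young_gen_mat_square:
  assumes "1 \<le> k" "Suc k \<le> p"
  shows "mat_mult (dim \<mu>) (young_gen_mat k) (young_gen_mat k) = mat_one (dim \<mu>)"
proof (rule mats_eqI[OF mat_mult_in mat_one_in])
  fix a b
  assume a: "a \<in> {1..dim \<mu>}" and b: "b \<in> {1..dim \<mu>}"
  have "1 \<le> k" "Suc k \<le> card (cells \<mu>)"
    using assms card_shape by auto
  then show "mat_mult (dim \<mu>) (young_gen_mat k) (young_gen_mat k) a b = mat_one (dim \<mu>) a b"
    using column_funD[OF column_fun_mult[OF b assms column_fun_young_gen_mat[OF b assms]] a] a
      young_op_square[OF standard_tableau_tab[OF a] down_closed_shape] tab_index_tab[OF a]
    by (auto simp: mat_one_def)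
qed

lemma young_gen_mat_braid:
  assumes "1 \<le> k" "Suc (Suc k) \<le> p"
  shows "mat_mult (dim \<mu>) (mat_mult (dim \<mu>) (young_gen_mat k) (young_gen_mat (Suc k))) (young_gen_mat k)
       = mat_mult (dim \<mu>) (mat_mult (dim \<mu>) (young_gen_mat (Suc k)) (young_gen_mat k)) (young_gen_mat (Suc k))"
  unfolding mat_mult_assoc
proof (rule mats_eqI[OF mat_mult_in mat_mult_in])
  fix a b
  assume a: "a \<in> {1..dim \<mu>}" and b: "b \<in> {1..dim \<mu>}"
  have k: "1 \<le> k" "Suc k \<le> p" "1 \<le> Suc k" "Suc (Suc k) \<le> p" "Suc (Suc k) \<le> card (cells \<mu>)"
    using assms card_shape by auto
  note col = column_fun_mult[OF b] column_fun_young_gen_mat[OF b]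
  show "mat_mult (dim \<mu>) (young_gen_mat k) (mat_mult (dim \<mu>) (young_gen_mat (Suc k)) (young_gen_mat k)) a b
      = mat_mult (dim \<mu>) (young_gen_mat (Suc k)) (mat_mult (dim \<mu>) (young_gen_mat k) (young_gen_mat (Suc k))) a b"
    using column_funD[OF col(1)[OF k(1,2) col(1)[OF k(3,4) col(2)[OF k(1,2)]]] a]
      column_funD[OF col(1)[OF k(3,4) col(1)[OF k(1,2) col(2)[OF k(3,4)]]] a]
      young_op_braid[OF standard_tableau_tab[OF a] down_closed_shape k(1,5)]
    by simp
qed

lemma young_gen_mat_comm:
  assumes "1 \<le> i" "Suc i < j" "j < p"
  shows "mat_mult (dim \<mu>) (young_gen_mat i) (young_gen_mat j) = mat_mult (dim \<mu>) (young_gen_mat j) (young_gen_mat i)"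
proof (rule mats_eqI[OF mat_mult_in mat_mult_in])
  fix a b
  assume a: "a \<in> {1..dim \<mu>}" and b: "b \<in> {1..dim \<mu>}"
  have k: "1 \<le> i" "Suc i \<le> p" "1 \<le> j" "Suc j \<le> p"
    using assms by auto
  note col = column_fun_mult[OF b] column_fun_young_gen_mat[OF b]
  show "mat_mult (dim \<mu>) (young_gen_mat i) (young_gen_mat j) a b = mat_mult (dim \<mu>) (young_gen_mat j) (young_gen_mat i) a b"
    using column_funD[OF col(1)[OF k(1,2) col(2)[OF k(3,4)]] a] column_funD[OF col(1)[OF k(3,4) col(2)[OF k(1,2)]] a]
      young_op_comm[OF standard_tableau_numbering[OF standard_tableau_tab[OF a]] assms(1,2)] k(4) card_shape
    by simp
qed

lemma coxeter_relations_young: "coxeter_relations (mat_mult (dim \<mu>)) (mat_one (dim \<mu>)) (mats (dim \<mu>)) young_gen_mat p"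
  by unfold_locales
    (auto simp: mat_one_in mat_mult_in young_gen_mat_in mat_one_left mat_one_right young_gen_mat_square
      intro: mat_mult_assoc young_gen_mat_braid young_gen_mat_comm)

lemma yrep_spec:
  "(\<forall>\<sigma> \<tau>. \<sigma> permutes {1..p} \<longrightarrow> \<tau> permutes {1..p} \<longrightarrow>
      (\<forall>a\<in>{1..dim \<mu>}. \<forall>b\<in>{1..dim \<mu>}. yrep \<mu> (\<sigma> \<circ> \<tau>) a b = matmul (dim \<mu>) (yrep \<mu> \<sigma>) (yrep \<mu> \<tau>) a b))
    \<and> (\<forall>k\<in>{1..<p}. \<forall>a\<in>{1..dim \<mu>}. \<forall>b\<in>{1..dim \<mu>}. yrep \<mu> (adj_transp k) a b = young_gen \<mu> k a b)"
proof -
  obtain \<phi> where hom: "\<forall>s t. s permutes {1..p} \<longrightarrow> t permutes {1..p} \<longrightarrow> \<phi> (s \<circ> t) = mat_mult (dim \<mu>) (\<phi> s) (\<phi> t)"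
    and gen: "\<forall>k. 1 \<le> k \<longrightarrow> k < p \<longrightarrow> \<phi> (adj_transp k) = young_gen_mat k"
    using coxeter_presentation[OF coxeter_relations_young] by blast
  show ?thesis
    unfolding yrep_def sum_list_shape
  proof (rule someI[where x = \<phi>], intro conjI allI impI ballI)
    fix \<sigma> \<tau> a b
    assume "\<sigma> permutes {1..p}" "\<tau> permutes {1..p}" "a \<in> {1..dim \<mu>}" "b \<in> {1..dim \<mu>}"
    then show "\<phi> (\<sigma> \<circ> \<tau>) a b = matmul (dim \<mu>) (\<phi> \<sigma>) (\<phi> \<tau>) a b"
      using hom by (simp add: mat_mult_def)
  next
    fix k a b
    assume "k \<in> {1..<p}" "a \<in> {1..dim \<mu>}" "b \<in> {1..dim \<mu>}"
    then show "\<phi> (adj_transp k) a b = young_gen \<mu> k a b"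
      using gen by (simp add: young_gen_mat_def)
  qed

qed

lemma yrep_mult:
  "\<sigma> permutes {1..p} \<Longrightarrow> \<tau> permutes {1..p} \<Longrightarrow> a \<in> {1..dim \<mu>} \<Longrightarrow> b \<in> {1..dim \<mu>} \<Longrightarrow>
   yrep \<mu> (\<sigma> \<circ> \<tau>) a b = (\<Sum>c\<in>{1..dim \<mu>}. yrep \<mu> \<sigma> a c * yrep \<mu> \<tau> c b)"
  using yrep_spec unfolding matmul_def by blast

lemma yrep_adj_transp:
  "1 \<le> k \<Longrightarrow> k < p \<Longrightarrow> a \<in> {1..dim \<mu>} \<Longrightarrow> b \<in> {1..dim \<mu>} \<Longrightarrow> yrep \<mu> (adj_transp k) a b = young_gen \<mu> k a b"
  using yrep_spec by auto

text \<open>The specification of \<open>yrep\<close> determines the image of the identity only through \<open>s\<^sub>1\<^sup>2 = id\<close>,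
  hence the hypothesis \<open>2 \<le> p\<close>.\<close>

lemma yrep_id:
  assumes "2 \<le> p" "a \<in> {1..dim \<mu>}" "b \<in> {1..dim \<mu>}"
  shows "yrep \<mu> id a b = of_bool (a = b)"
proof -
  have "adj_transp 1 permutes {1..p}"
    using assms(1) by (intro permutes_swap_id) auto
  then have "yrep \<mu> id a b = mat_mult (dim \<mu>) (young_gen_mat 1) (young_gen_mat 1) a b"
    using yrep_mult[of "adj_transp 1" "adj_transp 1" a b] assms
    by (simp add: yrep_adj_transp mat_mult_def matmul_def young_gen_mat_def)
  then show ?thesis
    using young_gen_mat_square[of 1] assms by (simp add: mat_one_def)
qed

end

section \<open>Jucys--Murphy elements\<close>

lemma transpose_Suc_conj:
  "i < k \<Longrightarrow> Transposition.transpose i (Suc k) = adj_transp k \<circ> Transposition.transpose i k \<circ> adj_transp k"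
  by (auto simp: fun_eq_iff Transposition.transpose_def)

context partition_shape
begin

definition jucys_murphy :: "nat \<Rightarrow> nat \<Rightarrow> nat \<Rightarrow> complex" where
  "jucys_murphy k a b = (\<Sum>i\<in>{1..<k}. yrep \<mu> (Transposition.transpose i k) a b)"

lemma jucys_murphy_Suc:
  assumes k: "1 \<le> k" "Suc k \<le> p" and a: "a \<in> {1..dim \<mu>}" and b: "b \<in> {1..dim \<mu>}"
  shows "jucys_murphy (Suc k) a b
      = (\<Sum>c\<in>{1..dim \<mu>}. young_gen \<mu> k a c * (\<Sum>d\<in>{1..dim \<mu>}. jucys_murphy k c d * young_gen \<mu> k d b))
        + young_gen \<mu> k a b"
proof -
  let ?I = "{1..dim \<mu>}" and ?G = "young_gen \<mu> k"
  have s: "adj_transp k permutes {1..p}"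
    using k by (intro permutes_swap_id) auto
  have G: "yrep \<mu> (adj_transp k) c d = ?G c d" if "c \<in> ?I" "d \<in> ?I" for c d
    using yrep_adj_transp[OF k(1) _ that] k by simp
  have "yrep \<mu> (Transposition.transpose i (Suc k)) a b
      = (\<Sum>c\<in>?I. ?G a c * (\<Sum>d\<in>?I. yrep \<mu> (Transposition.transpose i k) c d * ?G d b))"
    if i: "i \<in> {1..<k}" for i
  proof -
    have t: "Transposition.transpose i k permutes {1..p}"
      using i k by (intro permutes_swap_id) auto
    have "yrep \<mu> (Transposition.transpose i (Suc k)) a b
        = yrep \<mu> (adj_transp k \<circ> (Transposition.transpose i k \<circ> adj_transp k)) a b"
      using i by (simp add: transpose_Suc_conj comp_assoc)
    also have "\<dots> = (\<Sum>c\<in>?I. yrep \<mu> (adj_transp k) a c * yrep \<mu> (Transposition.transpose i k \<circ> adj_transp k) c b)"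
      using yrep_mult[OF s permutes_compose[OF s t] a b] .
    also have "\<dots> = (\<Sum>c\<in>?I. ?G a c * (\<Sum>d\<in>?I. yrep \<mu> (Transposition.transpose i k) c d * ?G d b))"
      using yrep_mult[OF t s _ b] G a b by (intro sum.cong refl) (auto intro!: sum.cong)
    finally show ?thesis .
  qed
  then have "(\<Sum>i\<in>{1..<k}. yrep \<mu> (Transposition.transpose i (Suc k)) a b)
      = (\<Sum>i\<in>{1..<k}. \<Sum>c\<in>?I. ?G a c * (\<Sum>d\<in>?I. yrep \<mu> (Transposition.transpose i k) c d * ?G d b))"
    by simp
  also have "\<dots> = (\<Sum>c\<in>?I. ?G a c * (\<Sum>i\<in>{1..<k}. \<Sum>d\<in>?I. yrep \<mu> (Transposition.transpose i k) c d * ?G d b))"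
    by (subst sum.swap) (simp add: sum_distrib_left)
  also have "\<dots> = (\<Sum>c\<in>?I. ?G a c * (\<Sum>d\<in>?I. jucys_murphy k c d * ?G d b))"
    unfolding jucys_murphy_def sum_distrib_right by (intro sum.cong refl) (subst sum.swap, rule refl)
  moreover have "yrep \<mu> (adj_transp k) a b = ?G a b"
    using yrep_adj_transp[OF k(1)] k a b by simp
  ultimately show ?thesis
    using k by (simp add: jucys_murphy_def atLeastLessThanSuc)
qed

lemma jucys_murphy_eq:
  assumes "2 \<le> p" "1 \<le> k" "k \<le> p" "a \<in> {1..dim \<mu>}" "b \<in> {1..dim \<mu>}"
  shows "jucys_murphy k a b = (if a = b then of_int (entry_content (cells \<mu>) (tab \<mu> a) k) else 0)"
  using assms(2-5)
proof (induction k arbitrary: a b rule: nat_induct_at_least)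
  case base
  then show ?case
    using entry_content_1[OF standard_tableau_tab down_closed_shape] card_shape assms(1)
    by (simp add: jucys_murphy_def)
next
  case (Suc k)
  let ?I = "{1..dim \<mu>}" and ?G = "young_gen \<mu> k" and ?cont = "\<lambda>U. of_int (entry_content (cells \<mu>) U k)"
  have k: "1 \<le> k" "Suc k \<le> p" "Suc k \<le> card (cells \<mu>)"
    using Suc card_shape by auto
  have col: "?G c b = young_op (cells \<mu>) k (\<lambda>U. of_bool (tab_index U = b)) (tab \<mu> c)" if "c \<in> ?I" for c
    using young_gen_sum[OF that k(1,2), of "\<lambda>d. of_bool (d = b)"] Suc.prems by (simp add: o_def)
  have "(\<Sum>d\<in>?I. jucys_murphy k c d * ?G d b) = ?cont (tab \<mu> c) * ?G c b" if "c \<in> ?I" for c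
    using Suc.IH[OF _ that] Suc.prems that by (simp add: if_distrib[of "\<lambda>x. x * _"] cong: if_cong)
  then have "(\<Sum>c\<in>?I. ?G a c * (\<Sum>d\<in>?I. jucys_murphy k c d * ?G d b))
      = (\<Sum>c\<in>?I. ?G a c * (?cont (tab \<mu> c) * ?G c b))"
    by simp
  also have "\<dots> = young_op (cells \<mu>) k (\<lambda>U. ?cont U * young_op (cells \<mu>) k (\<lambda>U. of_bool (tab_index U = b)) U) (tab \<mu> a)"
    using young_gen_sum[OF Suc.prems(2) k(1,2)] col tab_tab_index tab_index_in
    by (auto simp: o_def intro!: young_op_cong[OF standard_tableau_tab[OF Suc.prems(2)] down_closed_shape k(1,3)])
  finally show ?case
    using jucys_murphy_Suc[OF k(1,2) Suc.prems(2,3)] col[OF Suc.prems(2)] Suc.prems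
      young_op_jucys_murphy[OF standard_tableau_tab[OF Suc.prems(2)] down_closed_shape k(1,3)]
    by (simp add: tab_index_tab)
qed

end

section \<open>Schur orthogonality\<close>

lemma sum_eq_single:
  "finite A \<Longrightarrow> b \<in> A \<Longrightarrow> (\<And>c. c \<in> A \<Longrightarrow> c \<noteq> b \<Longrightarrow> f c = 0) \<Longrightarrow> sum f A = f b"
  using sum.mono_neutral_left[of A "{b}" f] by auto

lemma inv_comp_permutes: "q permutes S \<Longrightarrow> t permutes S \<Longrightarrow> t \<circ> inv (q \<circ> t) = inv q"
  by (simp add: o_inv_distrib permutes_bij comp_assoc[symmetric] permutes_inv_o(1))

text \<open>For shapes \<open>\<mu>\<close>, \<open>\<mu>'\<close> of the same size, \<open>average a b\<close> is the entry of
  \<open>\<Sum>\<^sub>\<sigma> \<phi>\<^sup>\<mu>(\<sigma>\<^sup>-\<^sup>1) E\<^sub>i\<^sub>j \<phi>\<^sup>\<mu>\<^sup>'(\<sigma>)\<close>, a matrix intertwining \<open>\<phi>\<^sup>\<mu>\<^sup>'\<close> with \<open>\<phi>\<^sup>\<mu>\<close>.\<close>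

locale shape_pair = A: partition_shape \<mu> p + B: partition_shape \<mu>' p
  for \<mu> \<mu>' :: "nat list" and p :: nat +
  fixes i j :: nat
  assumes p: "2 \<le> p" and i: "i \<in> {1..dim \<mu>}" and j: "j \<in> {1..dim \<mu>'}"
begin

definition average :: "nat \<Rightarrow> nat \<Rightarrow> complex" where
  "average a b = (\<Sum>\<sigma>\<in>{\<sigma>. \<sigma> permutes {1..p}}. yrep \<mu> (inv \<sigma>) a i * yrep \<mu>' \<sigma> j b)"

lemma average_intertwines:
  assumes t: "\<tau> permutes {1..p}" and a: "a \<in> {1..dim \<mu>}" and b: "b \<in> {1..dim \<mu>'}"
  shows "(\<Sum>c\<in>{1..dim \<mu>}. yrep \<mu> \<tau> a c * average c b) = (\<Sum>e\<in>{1..dim \<mu>'}. average a e * yrep \<mu>' \<tau> e b)"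
proof -
  let ?P = "{\<sigma>. \<sigma> permutes {1..p}}"
  have "(\<Sum>c\<in>{1..dim \<mu>}. yrep \<mu> \<tau> a c * average c b)
      = (\<Sum>\<sigma>\<in>?P. (\<Sum>c\<in>{1..dim \<mu>}. yrep \<mu> \<tau> a c * yrep \<mu> (inv \<sigma>) c i) * yrep \<mu>' \<sigma> j b)"
    unfolding average_def by (simp add: sum_distrib_left sum_distrib_right mult.assoc) (rule sum.swap)
  also have "\<dots> = (\<Sum>\<sigma>\<in>?P. yrep \<mu> (\<tau> \<circ> inv \<sigma>) a i * yrep \<mu>' \<sigma> j b)"
    using A.yrep_mult[OF t permutes_inv a i] by simp
  also have "\<dots> = (\<Sum>q\<in>?P. yrep \<mu> (\<tau> \<circ> inv (q \<circ> \<tau>)) a i * yrep \<mu>' (q \<circ> \<tau>) j b)"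
    by (rule sum_permutations_compose_right[OF t])
  also have "\<dots> = (\<Sum>q\<in>?P. yrep \<mu> (inv q) a i * (\<Sum>e\<in>{1..dim \<mu>'}. yrep \<mu>' q j e * yrep \<mu>' \<tau> e b))"
    using inv_comp_permutes[OF _ t] B.yrep_mult[OF _ t j b] by (intro sum.cong refl) simp
  also have "\<dots> = (\<Sum>e\<in>{1..dim \<mu>'}. average a e * yrep \<mu>' \<tau> e b)"
    unfolding average_def by (simp add: sum_distrib_left sum_distrib_right mult.assoc) (rule sum.swap)
  finally show ?thesis .
qed

lemma average_contents:
  assumes k: "1 \<le> k" "k \<le> p" and a: "a \<in> {1..dim \<mu>}" and b: "b \<in> {1..dim \<mu>'}"
  shows "of_int (entry_content (cells \<mu>) (tab \<mu> a) k) * average a b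
       = average a b * of_int (entry_content (cells \<mu>') (tab \<mu>' b) k)"
proof -
  have t: "Transposition.transpose t k permutes {1..p}" if "t \<in> {1..<k}" for t
    using that k by (intro permutes_swap_id) auto
  have "(\<Sum>c\<in>{1..dim \<mu>}. A.jucys_murphy k a c * average c b)
      = (\<Sum>t\<in>{1..<k}. \<Sum>c\<in>{1..dim \<mu>}. yrep \<mu> (Transposition.transpose t k) a c * average c b)"
    unfolding A.jucys_murphy_def by (simp add: sum_distrib_right) (rule sum.swap)
  also have "\<dots> = (\<Sum>t\<in>{1..<k}. \<Sum>e\<in>{1..dim \<mu>'}. average a e * yrep \<mu>' (Transposition.transpose t k) e b)"
    using average_intertwines[OF t a b] by simp
  also have "\<dots> = (\<Sum>e\<in>{1..dim \<mu>'}. average a e * B.jucys_murphy k e b)"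
    unfolding B.jucys_murphy_def by (simp add: sum_distrib_left) (rule sum.swap)
  finally show ?thesis
    using A.jucys_murphy_eq[OF p k a] B.jucys_murphy_eq[OF p k _ b] a b
    by (simp add: if_distrib[of "\<lambda>x. x * _"] if_distrib[of "\<lambda>x. _ * x"] cong: if_cong)
qed

lemma average_eq_0:
  assumes a: "a \<in> {1..dim \<mu>}" and b: "b \<in> {1..dim \<mu>'}" and "\<not> (\<mu> = \<mu>' \<and> a = b)"
  shows "average a b = 0"
proof (rule ccontr)
  assume "average a b \<noteq> 0"
  then have "\<forall>k\<in>{1..card (cells \<mu>)}. entry_content (cells \<mu>) (tab \<mu> a) k = entry_content (cells \<mu>') (tab \<mu>' b) k"
    using average_contents[OF _ _ a b] A.card_shape by (auto simp: mult.commute)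
  then have "cells \<mu> = cells \<mu>'" "tab \<mu> a = tab \<mu>' b"
    using content_vector_determines_tableau[OF A.standard_tableau_tab[OF a] B.standard_tableau_tab[OF b]
        A.down_closed_shape B.down_closed_shape] A.card_shape B.card_shape by simp_all
  moreover have "0 \<notin> set \<mu>" "0 \<notin> set \<mu>'"
    using A.partition B.partition by (auto simp: is_partition_def)
  ultimately show False
    using assms cells_inj A.tab_inj by metis
qed

text \<open>Along an edge \<open>T \<rightarrow> s\<^sub>k \<circ> T\<close> of the tableau graph, the coefficient of \<open>s\<^sub>k\<close> linking
  the two basis vectors is nonzero; intertwining with \<open>\<phi>(s\<^sub>k)\<close> then equates the diagonal entries.\<close>

lemma average_diag_step:
  assumes "\<mu>' = \<mu>" and step: "tableau_step (cells \<mu>) T U"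
  shows "average (A.tab_index T) (A.tab_index T) = average (A.tab_index U) (A.tab_index U)"
proof -
  obtain k where k: "1 \<le> k" "Suc k \<le> card (cells \<mu>)" "U = adj_transp k \<circ> T"
    and T: "standard_tableau (cells \<mu>) T" and U: "standard_tableau (cells \<mu>) U"
    using step unfolding tableau_step_def by blast
  define a b where "a = A.tab_index U" and "b = A.tab_index T"
  have ab: "a \<in> {1..dim \<mu>}" "b \<in> {1..dim \<mu>}" "tab \<mu> a = U" "tab \<mu> b = T"
    using A.tab_index_in A.tab_tab_index T U by (simp_all add: a_def b_def)
  have "adj_transp k \<circ> T \<noteq> T"
    using numbering_entry_cell[OF standard_tableau_numbering[OF T], of k] k(1,2) by (metis comp_apply transpose_apply_first n_not_Suc_n atLeastAtMost_iff Suc_leD)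
  then have "a \<noteq> b"
    using ab k(3) by auto
  have kp: "1 \<le> k" "k < p"
    using k A.card_shape by auto
  have s: "adj_transp k permutes {1..p}"
    using kp by (intro permutes_swap_id) auto
  have G: "yrep \<mu> (adj_transp k) a b = young_offdiag (axial_dist (cells \<mu>) T k)"
    using A.yrep_adj_transp[OF kp ab(1,2)] A.young_gen_eq ab k(3) \<open>a \<noteq> b\<close> by simp
  have nz: "yrep \<mu> (adj_transp k) a b \<noteq> 0"
    unfolding G using young_offdiag_admissible[OF T k(1,2)] U k(3) by simp
  have "(\<Sum>c\<in>{1..dim \<mu>}. yrep \<mu> (adj_transp k) a c * average c b) = yrep \<mu> (adj_transp k) a b * average b b"
    using ab average_eq_0 assms(1) by (intro sum_eq_single) auto
  moreover have "(\<Sum>e\<in>{1..dim \<mu>}. average a e * yrep \<mu> (adj_transp k) e b) = average a a * yrep \<mu> (adj_transp k) a b"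
    using ab average_eq_0 assms(1) by (intro sum_eq_single) auto
  ultimately have "yrep \<mu> (adj_transp k) a b * average b b = average a a * yrep \<mu> (adj_transp k) a b"
    using average_intertwines[OF s ab(1), of b] ab assms(1) by simp
  then show ?thesis
    using nz by (simp add: a_def b_def)
qed

lemma average_diag_const:
  assumes "\<mu>' = \<mu>" and a: "a \<in> {1..dim \<mu>}" and r: "r \<in> {1..dim \<mu>}"
  shows "average a a = average r r"
proof -
  have "(tableau_step (cells \<mu>))\<^sup>*\<^sup>* (tab \<mu> a) (tab \<mu> r)"
    using standard_tableaux_connected[OF finite_cells A.down_closed_shape] A.standard_tableau_tab a r by blast
  then have "average (A.tab_index (tab \<mu> a)) (A.tab_index (tab \<mu> a)) = average (A.tab_index (tab \<mu> r)) (A.tab_index (tab \<mu> r))"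
    by (induction rule: rtranclp_induct) (simp_all add: average_diag_step[OF assms(1)])
  then show ?thesis
    using A.tab_index_tab a r by simp
qed

lemma average_trace:
  assumes "\<mu>' = \<mu>"
  shows "(\<Sum>a\<in>{1..dim \<mu>}. average a a) = of_nat (fact p) * of_bool (i = j)"
proof -
  let ?P = "{\<sigma>. \<sigma> permutes {1..p}}"
  have j': "j \<in> {1..dim \<mu>}"
    using j assms by simp
  have "(\<Sum>a\<in>{1..dim \<mu>}. average a a) = (\<Sum>a\<in>{1..dim \<mu>}. \<Sum>\<sigma>\<in>?P. yrep \<mu> (inv \<sigma>) a i * yrep \<mu> \<sigma> j a)"
    unfolding average_def using assms by simp
  also have "\<dots> = (\<Sum>\<sigma>\<in>?P. \<Sum>a\<in>{1..dim \<mu>}. yrep \<mu> \<sigma> j a * yrep \<mu> (inv \<sigma>) a i)"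
    by (subst sum.swap) (simp add: mult.commute)
  also have "\<dots> = (\<Sum>\<sigma>\<in>?P. yrep \<mu> id j i)"
  proof (rule sum.cong[OF refl])
    fix \<sigma>
    assume "\<sigma> \<in> ?P"
    then have s: "\<sigma> permutes {1..p}"
      by simp
    show "(\<Sum>a\<in>{1..dim \<mu>}. yrep \<mu> \<sigma> j a * yrep \<mu> (inv \<sigma>) a i) = yrep \<mu> id j i"
      using A.yrep_mult[OF s permutes_inv[OF s] j' i] permutes_inv_o(1)[OF s] by simp
  qed
  also have "\<dots> = of_nat (fact p) * of_bool (i = j)"
    using A.yrep_id[OF p j' i] by (auto simp: card_permutations)
  finally show ?thesis .
qed

lemma average_eq:
  assumes a: "a \<in> {1..dim \<mu>}" and b: "b \<in> {1..dim \<mu>'}"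
  shows "average a b = (if \<mu> = \<mu>' \<and> a = b \<and> i = j then of_nat (fact p) / of_nat (dim \<mu>) else 0)"
proof (cases "\<mu> = \<mu>' \<and> a = b")
  case True
  have "(\<Sum>c\<in>{1..dim \<mu>}. average c c) = (\<Sum>c\<in>{1..dim \<mu>}. average a a)"
    using average_diag_const[OF _ _ a] True by (intro sum.cong refl) auto
  then have "of_nat (dim \<mu>) * average a b = of_nat (fact p) * of_bool (i = j)"
    using average_trace True by simp
  moreover have "dim \<mu> \<noteq> 0"
    using A.partition dim_pos by fastforce
  ultimately have "average a b = of_nat (fact p) * of_bool (i = j) / of_nat (dim \<mu>)"
    by (simp add: eq_divide_eq mult.commute)
  then show ?thesis
    using True by simp
next
  case False
  then show ?thesis
    using average_eq_0[OF a b] by auto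
qed

end

lemma schur_orthogonality:
  assumes "is_partition p \<mu>" "is_partition p \<mu>'" "2 \<le> p"
    and "r \<in> {1..dim \<mu>}" "i \<in> {1..dim \<mu>}" "j \<in> {1..dim \<mu>'}" "r' \<in> {1..dim \<mu>'}"
  shows "(\<Sum>\<sigma>\<in>{\<sigma>. \<sigma> permutes {1..p}}. yrep \<mu> (inv \<sigma>) r i * yrep \<mu>' \<sigma> j r')
       = (if (\<mu> = \<mu>' \<and> i = j) \<and> r = r' then of_nat (fact p) / of_nat (dim \<mu>) else 0)"
proof -
  interpret shape_pair \<mu> \<mu>' p i j
    using assms by (simp add: shape_pair_def shape_pair_axioms_def partition_shape_def)
  show ?thesis
    using average_eq[OF assms(4,7)] unfolding average_def by (simp add: conj_ac)
qed

section \<open>Operators on tensor powers\<close>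

lemma finite_idx: "finite (idx d n)"
proof -
  have "idx d n = {xs. set xs \<subseteq> {..<d} \<and> length xs = n}"
    by (auto simp: idx_def)
  then show ?thesis
    by (simp add: finite_lists_length_eq)
qed

lemma opmul_assoc: "opmul d n (opmul d n A B) C = opmul d n A (opmul d n B C)"
proof (intro ext)
  fix x y
  have "opmul d n (opmul d n A B) C x y = (\<Sum>z\<in>idx d n. \<Sum>w\<in>idx d n. A x w * B w z * C z y)"
    by (simp add: opmul_def sum_distrib_right)
  also have "\<dots> = (\<Sum>w\<in>idx d n. \<Sum>z\<in>idx d n. A x w * B w z * C z y)"
    by (rule sum.swap)
  also have "\<dots> = opmul d n A (opmul d n B C) x y"
    by (simp add: opmul_def sum_distrib_left mult.assoc)
  finally show "opmul d n (opmul d n A B) C x y = opmul d n A (opmul d n B C) x y" .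
qed

lemma optr_opmul_commute: "optr d n (opmul d n A B) = optr d n (opmul d n B A)"
  unfolding optr_def opmul_def by (subst sum.swap) (simp add: mult.commute)

definition lincomb :: "'r set \<Rightarrow> ('r \<Rightarrow> complex) \<Rightarrow> ('r \<Rightarrow> op) \<Rightarrow> op" where
  "lincomb R a F = (\<lambda>x y. \<Sum>r\<in>R. a r * F r x y)"

lemma opmul_lincomb_left: "opmul d n (lincomb R a F) B = lincomb R a (\<lambda>r. opmul d n (F r) B)"
  unfolding opmul_def lincomb_def
  by (intro ext) (simp add: sum_distrib_left sum_distrib_right mult.assoc sum.swap[of _ R])

lemma opmul_lincomb_right: "opmul d n A (lincomb R a F) = lincomb R a (\<lambda>r. opmul d n A (F r))"
  unfolding opmul_def lincomb_def
  by (intro ext) (simp add: sum_distrib_left mult.left_commute sum.swap[of _ R])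

lemma optr_lincomb: "optr d n (lincomb R a F) = (\<Sum>r\<in>R. a r * optr d n (F r))"
  unfolding optr_def lincomb_def by (simp add: sum_distrib_left sum.swap[of _ R])

lemma tens_lincomb_left: "tens p (lincomb R a F) B = lincomb R a (\<lambda>r. tens p (F r) B)"
  by (intro ext) (simp add: tens_def lincomb_def sum_distrib_right mult.assoc)

lemma tens_lincomb_right: "tens p A (lincomb R a F) = lincomb R a (\<lambda>r. tens p A (F r))"
  by (intro ext) (simp add: tens_def lincomb_def sum_distrib_left mult.left_commute)

lemma lincomb_lincomb:
  "lincomb R a (\<lambda>r. lincomb S (b r) F) = lincomb S (\<lambda>s. \<Sum>r\<in>R. a r * b r s) F"
  unfolding lincomb_def by (intro ext) (simp add: sum_distrib_left sum_distrib_right mult.assoc sum.swap[of _ R])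

lemma lincomb_permutes_compose_left:
  assumes "\<sigma> permutes S"
  shows "lincomb {\<rho>. \<rho> permutes S} a (\<lambda>\<rho>. F (\<sigma> \<circ> \<rho>)) = lincomb {\<rho>. \<rho> permutes S} (\<lambda>\<rho>. a (inv \<sigma> \<circ> \<rho>)) F"
proof (intro ext)
  fix x y
  have "(\<Sum>\<rho>\<in>{\<rho>. \<rho> permutes S}. a (inv \<sigma> \<circ> \<rho>) * F \<rho> x y)
      = (\<Sum>\<rho>\<in>{\<rho>. \<rho> permutes S}. a (inv \<sigma> \<circ> (\<sigma> \<circ> \<rho>)) * F (\<sigma> \<circ> \<rho>) x y)"
    by (rule setum_permutations_compose_left[OF assms])
  then show "lincomb {\<rho>. \<rho> permutes S} a (\<lambda>\<rho>. F (\<sigma> \<circ> \<rho>)) x y = lincomb {\<rho>. \<rho> permutes S} (\<lambda>\<rho>. a (inv \<sigma> \<circ> \<rho>)) F x y"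
    by (simp add: lincomb_def o_assoc permutes_inv_o(2)[OF assms])
qed

lemma lincomb_permutes_compose_right:
  assumes "\<sigma> permutes S"
  shows "lincomb {\<rho>. \<rho> permutes S} a (\<lambda>\<rho>. F (\<rho> \<circ> \<sigma>)) = lincomb {\<rho>. \<rho> permutes S} (\<lambda>\<rho>. a (\<rho> \<circ> inv \<sigma>)) F"
proof (intro ext)
  fix x y
  have "(\<Sum>\<rho>\<in>{\<rho>. \<rho> permutes S}. a (\<rho> \<circ> inv \<sigma>) * F \<rho> x y)
      = (\<Sum>\<rho>\<in>{\<rho>. \<rho> permutes S}. a (\<rho> \<circ> \<sigma> \<circ> inv \<sigma>) * F (\<rho> \<circ> \<sigma>) x y)"
    by (rule sum_permutations_compose_right[OF assms])
  then show "lincomb {\<rho>. \<rho> permutes S} a (\<lambda>\<rho>. F (\<rho> \<circ> \<sigma>)) x y = lincomb {\<rho>. \<rho> permutes S} (\<lambda>\<rho>. a (\<rho> \<circ> inv \<sigma>)) F x y"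
    by (simp add: lincomb_def comp_assoc permutes_inv_o(1)[OF assms])
qed

text \<open>Operators are functions on all index lists, but only their entries on \<open>idx d n\<close> matter;
  identities such as \<open>Vperm_mult\<close> hold only there.\<close>

definition op_eq :: "nat \<Rightarrow> nat \<Rightarrow> op \<Rightarrow> op \<Rightarrow> bool" where
  "op_eq d n A B \<longleftrightarrow> (\<forall>x\<in>idx d n. \<forall>y\<in>idx d n. A x y = B x y)"

lemma op_eq_refl: "op_eq d n A A"
  by (simp add: op_eq_def)

lemma op_eq_lincomb: "(\<And>r. r \<in> R \<Longrightarrow> op_eq d n (F r) (G r)) \<Longrightarrow> op_eq d n (lincomb R a F) (lincomb R a G)"
  unfolding op_eq_def lincomb_def by (auto intro!: sum.cong)

lemma opmul_op_eq: "op_eq d n A A' \<Longrightarrow> op_eq d n B B' \<Longrightarrow> op_eq d n (opmul d n A B) (opmul d n A' B')"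
  unfolding op_eq_def opmul_def by (auto intro!: sum.cong)

lemma optr_op_eq: "op_eq d n A A' \<Longrightarrow> optr d n A = optr d n A'"
  unfolding op_eq_def optr_def by (auto intro!: sum.cong)

lemma idx_take_drop: "zs \<in> idx d (2 * p) \<Longrightarrow> rev (take p zs) \<in> idx d p \<and> drop p zs \<in> idx d p"
  using set_take_subset[of p zs] set_drop_subset[of p zs] by (auto simp: idx_def)

lemma tens_op_eq: "op_eq d p A A' \<Longrightarrow> op_eq d p B B' \<Longrightarrow> op_eq d (2 * p) (tens p A B) (tens p A' B')"
  unfolding op_eq_def tens_def using idx_take_drop by metis

lemma idx_split_bij:
  "bij_betw (\<lambda>us. (rev (take p us), drop p us)) (idx d (2 * p)) (idx d p \<times> idx d p)"
proof (rule bij_betw_byWitness[where f' = "\<lambda>(a, b). rev a @ b"])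
  show "(\<lambda>us. (rev (take p us), drop p us)) ` idx d (2 * p) \<subseteq> idx d p \<times> idx d p"
    using idx_take_drop by blast
qed (auto simp: idx_def)

lemma tens_opmul: "opmul d (2 * p) (tens p A B) (tens p C D) = tens p (opmul d p A C) (opmul d p B D)"
proof (intro ext)
  fix zs ws
  let ?g = "\<lambda>u v. A (rev (take p zs)) u * B (drop p zs) v * (C u (rev (take p ws)) * D v (drop p ws))"
  have "opmul d (2 * p) (tens p A B) (tens p C D) zs ws
      = (\<Sum>us\<in>idx d (2 * p). case_prod ?g (rev (take p us), drop p us))"
    by (simp add: opmul_def tens_def)
  also have "\<dots> = (\<Sum>uv\<in>idx d p \<times> idx d p. case_prod ?g uv)"
    by (rule sum.reindex_bij_betw[OF idx_split_bij])
  also have "\<dots> = (\<Sum>u\<in>idx d p. \<Sum>v\<in>idx d p. ?g u v)"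
    by (rule sum.cartesian_product[symmetric])
  also have "\<dots> = tens p (opmul d p A C) (opmul d p B D) zs ws"
    by (simp add: tens_def opmul_def sum_product mult.assoc mult.left_commute)
  finally show "opmul d (2 * p) (tens p A B) (tens p C D) zs ws = tens p (opmul d p A C) (opmul d p B D) zs ws" .
qed

definition permute_idx :: "nat \<Rightarrow> (nat \<Rightarrow> nat) \<Rightarrow> nat list \<Rightarrow> nat list" where
  "permute_idx p \<sigma> xs = map (\<lambda>m. xs ! (inv \<sigma> (Suc m) - 1)) [0..<p]"

lemma Vperm_eq:
  assumes "length ys = p"
  shows "Vperm p \<sigma> ys xs = of_bool (ys = permute_idx p \<sigma> xs)"
proof -
  have "(\<forall>k\<in>{1..p}. ys ! (k - 1) = xs ! (inv \<sigma> k - 1)) \<longleftrightarrow> (\<forall>m<p. ys ! m = xs ! (inv \<sigma> (Suc m) - 1))"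
  proof
    assume H: "\<forall>k\<in>{1..p}. ys ! (k - 1) = xs ! (inv \<sigma> k - 1)"
    show "\<forall>m<p. ys ! m = xs ! (inv \<sigma> (Suc m) - 1)"
      using H[rule_format, of "Suc _"] by simp
  next
    assume H: "\<forall>m<p. ys ! m = xs ! (inv \<sigma> (Suc m) - 1)"
    show "\<forall>k\<in>{1..p}. ys ! (k - 1) = xs ! (inv \<sigma> k - 1)"
    proof
      fix k
      assume "k \<in> {1..p}"
      then obtain m where "k = Suc m" "m < p"
        by (cases k) auto
      then show "ys ! (k - 1) = xs ! (inv \<sigma> k - 1)"
        using H by simp
    qed
  qed
  then show ?thesis
    using assms by (simp add: Vperm_def permute_idx_def list_eq_iff_nth_eq)
qed

lemma inv_permutes_index:
  "\<sigma> permutes {1..p} \<Longrightarrow> m < p \<Longrightarrow> inv \<sigma> (Suc m) - 1 < p \<and> Suc (inv \<sigma> (Suc m) - 1) = inv \<sigma> (Suc m)"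
  using permutes_in_image[OF permutes_inv, of \<sigma> "{1..p}" "Suc m"] by auto

lemma permute_idx_in:
  assumes "\<sigma> permutes {1..p}" "xs \<in> idx d p"
  shows "permute_idx p \<sigma> xs \<in> idx d p"
proof -
  have "xs ! (inv \<sigma> (Suc m) - 1) < d" if "m < p" for m
    using inv_permutes_index[OF assms(1) that] assms(2) nth_mem[of "inv \<sigma> (Suc m) - 1" xs] by (auto simp: idx_def)
  then show ?thesis
    by (auto simp: idx_def permute_idx_def)
qed

lemma permute_idx_comp:
  assumes "\<sigma> permutes {1..p}" "\<tau> permutes {1..p}"
  shows "permute_idx p \<sigma> (permute_idx p \<tau> xs) = permute_idx p (\<sigma> \<circ> \<tau>) xs"
  using inv_permutes_index[OF assms(1)] assms by (auto simp: permute_idx_def o_inv_distrib permutes_bij)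

lemma Vperm_mult:
  assumes "\<sigma> permutes {1..p}" "\<tau> permutes {1..p}" "ys \<in> idx d p" "xs \<in> idx d p"
  shows "opmul d p (Vperm p \<sigma>) (Vperm p \<tau>) ys xs = Vperm p (\<sigma> \<circ> \<tau>) ys xs"
proof -
  have "opmul d p (Vperm p \<sigma>) (Vperm p \<tau>) ys xs
      = (\<Sum>zs\<in>idx d p. of_bool (ys = permute_idx p \<sigma> zs) * of_bool (zs = permute_idx p \<tau> xs))"
    unfolding opmul_def using assms(3) by (intro sum.cong refl) (simp add: Vperm_eq idx_def)
  also have "\<dots> = of_bool (ys = permute_idx p \<sigma> (permute_idx p \<tau> xs)) * of_bool (permute_idx p \<tau> xs = permute_idx p \<tau> xs)"
    by (rule sum_eq_single) (auto simp: finite_idx permute_idx_in[OF assms(2,4)])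
  finally show ?thesis
    using assms by (simp add: permute_idx_comp Vperm_eq idx_def)
qed

context partition_shape
begin

lemma Eunit_eq_lincomb:
  "Eunit \<mu> i j = lincomb {\<sigma>. \<sigma> permutes {1..p}} (\<lambda>\<sigma>. of_nat (dim \<mu>) / of_nat (fact p) * yrep \<mu> (inv \<sigma>) j i) (Vperm p)"
  by (simp add: Eunit_def lincomb_def sum_list_shape sum_distrib_left mult.assoc)

lemma Vperm_Eunit:
  assumes s: "\<sigma> permutes {1..p}" and "i \<in> {1..dim \<mu>}" "j \<in> {1..dim \<mu>}"
  shows "op_eq d p (opmul d p (Vperm p \<sigma>) (Eunit \<mu> i j)) (lincomb {1..dim \<mu>} (\<lambda>r. yrep \<mu> \<sigma> r i) (\<lambda>r. Eunit \<mu> r j))"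
proof -
  let ?P = "{\<rho>. \<rho> permutes {1..p}}" and ?c = "of_nat (dim \<mu>) / of_nat (fact p) :: complex"
  let ?f = "\<lambda>\<rho>. ?c * yrep \<mu> (inv \<rho>) j i"
  have "lincomb ?P ?f (\<lambda>\<rho>. Vperm p (\<sigma> \<circ> \<rho>)) = lincomb ?P (\<lambda>\<rho>. ?f (inv \<sigma> \<circ> \<rho>)) (Vperm p)"
    by (rule lincomb_permutes_compose_left[OF s])
  also have "\<dots> = lincomb ?P (\<lambda>\<rho>. ?c * yrep \<mu> (inv \<rho> \<circ> \<sigma>) j i) (Vperm p)"
    unfolding lincomb_def using permutes_bij[OF s] permutes_bij[OF permutes_inv[OF s]]
    by (intro ext sum.cong refl) (simp add: o_inv_distrib permutes_bij inv_inv_eq)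
  also have "\<dots> = lincomb ?P (\<lambda>\<rho>. \<Sum>r\<in>{1..dim \<mu>}. yrep \<mu> \<sigma> r i * (?c * yrep \<mu> (inv \<rho>) j r)) (Vperm p)"
    unfolding lincomb_def using yrep_mult[OF permutes_inv s assms(3,2)]
    by (intro ext sum.cong refl) (simp add: sum_distrib_left mult_ac)
  also have "\<dots> = lincomb {1..dim \<mu>} (\<lambda>r. yrep \<mu> \<sigma> r i) (\<lambda>r. Eunit \<mu> r j)"
    by (simp add: lincomb_lincomb Eunit_eq_lincomb)
  finally have eq: "lincomb ?P ?f (\<lambda>\<rho>. Vperm p (\<sigma> \<circ> \<rho>)) = lincomb {1..dim \<mu>} (\<lambda>r. yrep \<mu> \<sigma> r i) (\<lambda>r. Eunit \<mu> r j)" .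
  have "op_eq d p (lincomb ?P ?f (\<lambda>\<rho>. opmul d p (Vperm p \<sigma>) (Vperm p \<rho>))) (lincomb ?P ?f (\<lambda>\<rho>. Vperm p (\<sigma> \<circ> \<rho>)))"
    using Vperm_mult[OF s] by (intro op_eq_lincomb) (simp add: op_eq_def)
  then show ?thesis
    by (simp only: Eunit_eq_lincomb[of i j] opmul_lincomb_right eq)
qed

lemma Eunit_Vperm:
  assumes s: "\<sigma> permutes {1..p}" and "i \<in> {1..dim \<mu>}" "j \<in> {1..dim \<mu>}"
  shows "op_eq d p (opmul d p (Eunit \<mu> i j) (Vperm p \<sigma>)) (lincomb {1..dim \<mu>} (\<lambda>r. yrep \<mu> \<sigma> j r) (\<lambda>r. Eunit \<mu> i r))"
proof -
  let ?P = "{\<rho>. \<rho> permutes {1..p}}" and ?c = "of_nat (dim \<mu>) / of_nat (fact p) :: complex"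
  let ?f = "\<lambda>\<rho>. ?c * yrep \<mu> (inv \<rho>) j i"
  have "lincomb ?P ?f (\<lambda>\<rho>. Vperm p (\<rho> \<circ> \<sigma>)) = lincomb ?P (\<lambda>\<rho>. ?f (\<rho> \<circ> inv \<sigma>)) (Vperm p)"
    by (rule lincomb_permutes_compose_right[OF s])
  also have "\<dots> = lincomb ?P (\<lambda>\<rho>. ?c * yrep \<mu> (\<sigma> \<circ> inv \<rho>) j i) (Vperm p)"
    unfolding lincomb_def using permutes_bij[OF s] permutes_bij[OF permutes_inv[OF s]]
    by (intro ext sum.cong refl) (simp add: o_inv_distrib permutes_bij inv_inv_eq)
  also have "\<dots> = lincomb ?P (\<lambda>\<rho>. \<Sum>r\<in>{1..dim \<mu>}. yrep \<mu> \<sigma> j r * (?c * yrep \<mu> (inv \<rho>) r i)) (Vperm p)"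
    unfolding lincomb_def using yrep_mult[OF s permutes_inv assms(3,2)]
    by (intro ext sum.cong refl) (simp add: sum_distrib_left mult_ac)
  also have "\<dots> = lincomb {1..dim \<mu>} (\<lambda>r. yrep \<mu> \<sigma> j r) (\<lambda>r. Eunit \<mu> i r)"
    by (simp add: lincomb_lincomb Eunit_eq_lincomb)
  finally have eq: "lincomb ?P ?f (\<lambda>\<rho>. Vperm p (\<rho> \<circ> \<sigma>)) = lincomb {1..dim \<mu>} (\<lambda>r. yrep \<mu> \<sigma> j r) (\<lambda>r. Eunit \<mu> i r)" .
  have "op_eq d p (lincomb ?P ?f (\<lambda>\<rho>. opmul d p (Vperm p \<rho>) (Vperm p \<sigma>))) (lincomb ?P ?f (\<lambda>\<rho>. Vperm p (\<rho> \<circ> \<sigma>)))"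
    using Vperm_mult[OF _ s] by (intro op_eq_lincomb) (simp add: op_eq_def)
  then show ?thesis
    by (simp only: Eunit_eq_lincomb[of i j] opmul_lincomb_left eq)
qed

end

section \<open>The twirl against matrix units\<close>

definition sandwich_trace :: "nat \<Rightarrow> nat \<Rightarrow> op \<Rightarrow> op \<Rightarrow> op \<Rightarrow> op \<Rightarrow> op \<Rightarrow> op \<Rightarrow> complex" where
  "sandwich_trace d p X Y A B C D =
     optr d (2 * p) (opmul d (2 * p) X (opmul d (2 * p) (opmul d (2 * p) (tens p A B) Y) (tens p C D)))"

lemma sandwich_trace_op_eq:
  "op_eq d p A A' \<Longrightarrow> op_eq d p B B' \<Longrightarrow> op_eq d p C C' \<Longrightarrow> op_eq d p D D' \<Longrightarrow>
   sandwich_trace d p X Y A B C D = sandwich_trace d p X Y A' B' C' D'"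
  unfolding sandwich_trace_def by (intro optr_op_eq opmul_op_eq op_eq_refl tens_op_eq)

lemma sandwich_trace_lincomb:
  "sandwich_trace d p X Y (lincomb R a A) (lincomb S b B) (lincomb T c C) (lincomb U e D)
   = (\<Sum>r\<in>R. a r * (\<Sum>s\<in>S. b s * (\<Sum>t\<in>T. c t * (\<Sum>u\<in>U. e u * sandwich_trace d p X Y (A r) (B s) (C t) (D u)))))"
proof -
  have A: "sandwich_trace d p X Y (lincomb R a A) B' C' D' = (\<Sum>r\<in>R. a r * sandwich_trace d p X Y (A r) B' C' D')"
    and B: "sandwich_trace d p X Y A' (lincomb S b B) C' D' = (\<Sum>s\<in>S. b s * sandwich_trace d p X Y A' (B s) C' D')"
    and C: "sandwich_trace d p X Y A' B' (lincomb T c C) D' = (\<Sum>t\<in>T. c t * sandwich_trace d p X Y A' B' (C t) D')"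
    and D: "sandwich_trace d p X Y A' B' C' (lincomb U e D) = (\<Sum>u\<in>U. e u * sandwich_trace d p X Y A' B' C' (D u))"
    for A' B' C' D'
    unfolding sandwich_trace_def tens_lincomb_left tens_lincomb_right opmul_lincomb_left opmul_lincomb_right optr_lincomb
    by (rule refl)+
  show ?thesis
    by (simp only: A, simp only: B, simp only: C, simp only: D)
qed

lemma tens_opmul_assoc:
  "opmul d (2 * p) (tens p A B) (opmul d (2 * p) (tens p C D) M) = opmul d (2 * p) (tens p (opmul d p A C) (opmul d p B D)) M"
  by (simp add: tens_opmul flip: opmul_assoc)

text \<open>Moving the permutations of the twirl from \<open>X\<close> onto the other factors, by cyclicity of the trace.\<close>

lemma trace_twirl:
  "optr d (2 * p) (opmul d (2 * p) (opmul d (2 * p) (opmul d (2 * p) (twirl d p X) (tens p A B)) Y) (tens p C D))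
   = 1 / (of_nat (fact p))\<^sup>2 * (\<Sum>\<sigma>\<in>{\<sigma>. \<sigma> permutes {1..p}}. \<Sum>\<tau>\<in>{\<tau>. \<tau> permutes {1..p}}.
       sandwich_trace d p X Y (opmul d p (Vperm p (inv \<sigma>)) A) (opmul d p (Vperm p (inv \<tau>)) B)
         (opmul d p C (Vperm p \<sigma>)) (opmul d p D (Vperm p \<tau>)))"
proof -
  let ?P = "{\<sigma>. \<sigma> permutes {1..p}}" and ?m = "opmul d (2 * p)"
  define M where "M = ?m (?m (tens p A B) Y) (tens p C D)"
  have "twirl d p X = lincomb ?P (\<lambda>_. 1 / (of_nat (fact p))\<^sup>2) (\<lambda>\<sigma>. lincomb ?P (\<lambda>_. 1)
      (\<lambda>\<tau>. ?m (?m (tens p (Vperm p \<sigma>) (Vperm p \<tau>)) X) (tens p (Vperm p (inv \<sigma>)) (Vperm p (inv \<tau>)))))"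
    by (intro ext) (simp add: twirl_def lincomb_def sum_distrib_left)
  then have "optr d (2 * p) (?m (twirl d p X) M) = 1 / (of_nat (fact p))\<^sup>2 * (\<Sum>\<sigma>\<in>?P. \<Sum>\<tau>\<in>?P.
      optr d (2 * p) (?m (tens p (Vperm p \<sigma>) (Vperm p \<tau>)) (?m X (?m (tens p (Vperm p (inv \<sigma>)) (Vperm p (inv \<tau>))) M))))"
    by (simp add: opmul_lincomb_left optr_lincomb sum_distrib_left opmul_assoc)
  also have "\<dots> = 1 / (of_nat (fact p))\<^sup>2 * (\<Sum>\<sigma>\<in>?P. \<Sum>\<tau>\<in>?P.
      optr d (2 * p) (?m X (?m (?m (tens p (Vperm p (inv \<sigma>)) (Vperm p (inv \<tau>))) M) (tens p (Vperm p \<sigma>) (Vperm p \<tau>)))))"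
    by (subst optr_opmul_commute) (simp add: opmul_assoc)
  finally show ?thesis
    by (simp add: M_def sandwich_trace_def opmul_assoc tens_opmul tens_opmul_assoc)
qed

lemma sum_swap4:
  "(\<Sum>x\<in>A. \<Sum>r\<in>R. \<Sum>s\<in>S. \<Sum>t\<in>T. \<Sum>u\<in>U. f x r s t u) = (\<Sum>r\<in>R. \<Sum>s\<in>S. \<Sum>t\<in>T. \<Sum>u\<in>U. \<Sum>x\<in>A. f x r s t u)"
proof -
  have "(\<Sum>x\<in>A. \<Sum>r\<in>R. \<Sum>s\<in>S. \<Sum>t\<in>T. \<Sum>u\<in>U. f x r s t u) = (\<Sum>r\<in>R. \<Sum>x\<in>A. \<Sum>s\<in>S. \<Sum>t\<in>T. \<Sum>u\<in>U. f x r s t u)"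
    by (rule sum.swap)
  also have "\<dots> = (\<Sum>r\<in>R. \<Sum>s\<in>S. \<Sum>x\<in>A. \<Sum>t\<in>T. \<Sum>u\<in>U. f x r s t u)"
    by (intro sum.cong refl) (rule sum.swap)
  also have "\<dots> = (\<Sum>r\<in>R. \<Sum>s\<in>S. \<Sum>t\<in>T. \<Sum>x\<in>A. \<Sum>u\<in>U. f x r s t u)"
    by (intro sum.cong refl) (rule sum.swap)
  also have "\<dots> = (\<Sum>r\<in>R. \<Sum>s\<in>S. \<Sum>t\<in>T. \<Sum>u\<in>U. \<Sum>x\<in>A. f x r s t u)"
    by (intro sum.cong refl) (rule sum.swap)
  finally show ?thesis .
qed

lemma sum_rearrange:
  fixes g :: "_ \<Rightarrow> _ \<Rightarrow> _ \<Rightarrow> _ \<Rightarrow> complex"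
  shows "(\<Sum>x\<in>A. \<Sum>y\<in>B. \<Sum>r\<in>R. a1 x r * (\<Sum>s\<in>S. a2 y s * (\<Sum>t\<in>T. a3 x t * (\<Sum>u\<in>U. a4 y u * g r s t u))))
    = (\<Sum>r\<in>R. \<Sum>s\<in>S. \<Sum>t\<in>T. \<Sum>u\<in>U. (\<Sum>x\<in>A. a1 x r * a3 x t) * (\<Sum>y\<in>B. a2 y s * a4 y u) * g r s t u)"
proof -
  have "(\<Sum>x\<in>A. \<Sum>y\<in>B. \<Sum>r\<in>R. a1 x r * (\<Sum>s\<in>S. a2 y s * (\<Sum>t\<in>T. a3 x t * (\<Sum>u\<in>U. a4 y u * g r s t u))))
      = (\<Sum>x\<in>A. \<Sum>y\<in>B. \<Sum>r\<in>R. \<Sum>s\<in>S. \<Sum>t\<in>T. \<Sum>u\<in>U. a1 x r * a3 x t * (a2 y s * a4 y u) * g r s t u)"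
    by (simp add: sum_distrib_left mult_ac)
  also have "\<dots> = (\<Sum>y\<in>B. \<Sum>x\<in>A. \<Sum>r\<in>R. \<Sum>s\<in>S. \<Sum>t\<in>T. \<Sum>u\<in>U. a1 x r * a3 x t * (a2 y s * a4 y u) * g r s t u)"
    by (rule sum.swap)
  also have "\<dots> = (\<Sum>y\<in>B. \<Sum>r\<in>R. \<Sum>s\<in>S. \<Sum>t\<in>T. \<Sum>u\<in>U. \<Sum>x\<in>A. a1 x r * a3 x t * (a2 y s * a4 y u) * g r s t u)"
    by (intro sum.cong refl) (rule sum_swap4)
  also have "\<dots> = (\<Sum>r\<in>R. \<Sum>s\<in>S. \<Sum>t\<in>T. \<Sum>u\<in>U. \<Sum>y\<in>B. \<Sum>x\<in>A. a1 x r * a3 x t * (a2 y s * a4 y u) * g r s t u)"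
    by (rule sum_swap4)
  also have "\<dots> = (\<Sum>r\<in>R. \<Sum>s\<in>S. \<Sum>t\<in>T. \<Sum>u\<in>U. (\<Sum>x\<in>A. a1 x r * a3 x t) * (\<Sum>y\<in>B. a2 y s * a4 y u) * g r s t u)"
    by (simp add: sum_distrib_left sum_distrib_right mult_ac)
  finally show ?thesis .
qed

lemma trace_twirl_Eunit:
  assumes "is_partition p \<mu>" "is_partition p \<nu>" "is_partition p \<mu>'" "is_partition p \<nu>'"
    and "i \<in> {1..dim \<mu>}" "j \<in> {1..dim \<mu>}" "k \<in> {1..dim \<nu>}" "l \<in> {1..dim \<nu>}"
    and "i' \<in> {1..dim \<mu>'}" "j' \<in> {1..dim \<mu>'}" "k' \<in> {1..dim \<nu>'}" "l' \<in> {1..dim \<nu>'}"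
  shows "optr d (2 * p) (opmul d (2 * p) (opmul d (2 * p) (opmul d (2 * p) (twirl d p X)
           (tens p (Eunit \<mu> i j) (Eunit \<nu> k l))) Y) (tens p (Eunit \<mu>' i' j') (Eunit \<nu>' k' l')))
    = 1 / (of_nat (fact p))\<^sup>2 * (\<Sum>r\<in>{1..dim \<mu>}. \<Sum>s\<in>{1..dim \<nu>}. \<Sum>t\<in>{1..dim \<mu>'}. \<Sum>u\<in>{1..dim \<nu>'}.
        (\<Sum>\<sigma>\<in>{\<sigma>. \<sigma> permutes {1..p}}. yrep \<mu> (inv \<sigma>) r i * yrep \<mu>' \<sigma> j' t)
      * (\<Sum>\<tau>\<in>{\<tau>. \<tau> permutes {1..p}}. yrep \<nu> (inv \<tau>) s k * yrep \<nu>' \<tau> l' u)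
      * sandwich_trace d p X Y (Eunit \<mu> r j) (Eunit \<nu> s l) (Eunit \<mu>' i' t) (Eunit \<nu>' k' u))"
proof -
  interpret \<mu>: partition_shape \<mu> p by unfold_locales (rule assms(1))
  interpret \<nu>: partition_shape \<nu> p by unfold_locales (rule assms(2))
  interpret \<mu>': partition_shape \<mu>' p by unfold_locales (rule assms(3))
  interpret \<nu>': partition_shape \<nu>' p by unfold_locales (rule assms(4))
  have expand: "sandwich_trace d p X Y (opmul d p (Vperm p (inv \<sigma>)) (Eunit \<mu> i j)) (opmul d p (Vperm p (inv \<tau>)) (Eunit \<nu> k l))
      (opmul d p (Eunit \<mu>' i' j') (Vperm p \<sigma>)) (opmul d p (Eunit \<nu>' k' l') (Vperm p \<tau>))
    = (\<Sum>r\<in>{1..dim \<mu>}. yrep \<mu> (inv \<sigma>) r i * (\<Sum>s\<in>{1..dim \<nu>}. yrep \<nu> (inv \<tau>) s k *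
        (\<Sum>t\<in>{1..dim \<mu>'}. yrep \<mu>' \<sigma> j' t * (\<Sum>u\<in>{1..dim \<nu>'}. yrep \<nu>' \<tau> l' u *
          sandwich_trace d p X Y (Eunit \<mu> r j) (Eunit \<nu> s l) (Eunit \<mu>' i' t) (Eunit \<nu>' k' u)))))"
    if "\<sigma> permutes {1..p}" "\<tau> permutes {1..p}" for \<sigma> \<tau>
    unfolding sandwich_trace_lincomb[symmetric] using assms permutes_inv[OF that(1)] permutes_inv[OF that(2)]
    by (intro sandwich_trace_op_eq \<mu>.Vperm_Eunit \<nu>.Vperm_Eunit \<mu>'.Eunit_Vperm \<nu>'.Eunit_Vperm that)
  show ?thesis
    unfolding trace_twirl sum_rearrange[symmetric]
    by (intro arg_cong[where f = "\<lambda>x. _ * x"] sum.cong refl) (rule expand; simp)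
qed

lemma sum_kronecker:
  fixes G :: "'a \<Rightarrow> 'b \<Rightarrow> 'a \<Rightarrow> 'b \<Rightarrow> complex"
  assumes "finite I" "finite J" "P \<Longrightarrow> I' = I" "Q \<Longrightarrow> J' = J"
  shows "(\<Sum>r\<in>I. \<Sum>s\<in>J. \<Sum>t\<in>I'. \<Sum>u\<in>J'. (if P \<and> r = t then a else 0) * (if Q \<and> s = u then b else 0) * G r s t u)
       = (if P \<and> Q then a * b * (\<Sum>r\<in>I. \<Sum>s\<in>J. G r s r s) else 0)"
proof (cases "P \<and> Q")
  case True
  have "(\<Sum>t\<in>I. \<Sum>u\<in>J. (if r = t then a else 0) * (if s = u then b else 0) * G r s t u) = a * b * G r s r s"
    if "r \<in> I" "s \<in> J" for r s
  proof -
    have "(\<Sum>t\<in>I. \<Sum>u\<in>J. (if r = t then a else 0) * (if s = u then b else 0) * G r s t u)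
        = (\<Sum>u\<in>J. a * (if s = u then b else 0) * G r s r u)"
      using assms(1) that by (subst sum_eq_single[of I r]) auto
    also have "\<dots> = a * b * G r s r s"
      using assms(2) that by (subst sum_eq_single[of J s]) auto
    finally show ?thesis .
  qed
  then show ?thesis
    using True assms by (simp add: sum_distrib_left)
qed (auto intro!: sum.neutral)

theorem lemma22:
  fixes d p :: nat and X Y :: op and \<mu> \<nu> \<mu>' \<nu>' :: "nat list"
    and i j k l i' j' k' l' :: nat
  assumes "d \<ge> 2" and "p \<ge> 2"
    and "is_partition p \<mu>" "length \<mu> \<le> d"
    and "is_partition p \<nu>" "length \<nu> \<le> d"
    and "is_partition p \<mu>'" "length \<mu>' \<le> d"
    and "is_partition p \<nu>'" "length \<nu>' \<le> d"
    and "i \<in> {1..dim \<mu>}" "j \<in> {1..dim \<mu>}" "k \<in> {1..dim \<nu>}" "l \<in> {1..dim \<nu>}"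
    and "i' \<in> {1..dim \<mu>'}" "j' \<in> {1..dim \<mu>'}" "k' \<in> {1..dim \<nu>'}" "l' \<in> {1..dim \<nu>'}"
  shows "optr d (2*p)
           (opmul d (2*p) (opmul d (2*p) (opmul d (2*p) (twirl d p X)
              (tens p (Eunit \<mu> i j) (Eunit \<nu> k l))) Y)
              (tens p (Eunit \<mu>' i' j') (Eunit \<nu>' k' l')))
       = (if \<mu> = \<mu>' \<and> \<nu> = \<nu>' \<and> i = j' \<and> k = l' then
            (1 / (of_nat (dim \<mu>) * of_nat (dim \<nu>))) *
            (\<Sum>r\<in>{1..dim \<mu>}. \<Sum>s\<in>{1..dim \<nu>}.
               optr d (2*p)
                 (opmul d (2*p) (opmul d (2*p) (opmul d (2*p) X
                    (tens p (Eunit \<mu> r j) (Eunit \<nu> s l))) Y)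
                    (tens p (Eunit \<mu> i' r) (Eunit \<nu> k' s))))
          else 0)"
proof -
  let ?c = "1 / (of_nat (fact p))\<^sup>2 :: complex"
  let ?G = "\<lambda>r s t u. sandwich_trace d p X Y (Eunit \<mu> r j) (Eunit \<nu> s l) (Eunit \<mu>' i' t) (Eunit \<nu>' k' u)"
  have "optr d (2*p) (opmul d (2*p) (opmul d (2*p) (opmul d (2*p) (twirl d p X)
           (tens p (Eunit \<mu> i j) (Eunit \<nu> k l))) Y) (tens p (Eunit \<mu>' i' j') (Eunit \<nu>' k' l')))
    = ?c * (\<Sum>r\<in>{1..dim \<mu>}. \<Sum>s\<in>{1..dim \<nu>}. \<Sum>t\<in>{1..dim \<mu>'}. \<Sum>u\<in>{1..dim \<nu>'}.
        (if (\<mu> = \<mu>' \<and> i = j') \<and> r = t then of_nat (fact p) / of_nat (dim \<mu>) else 0)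
      * (if (\<nu> = \<nu>' \<and> k = l') \<and> s = u then of_nat (fact p) / of_nat (dim \<nu>) else 0) * ?G r s t u)"
    unfolding trace_twirl_Eunit[OF assms(3,5,7,9,11-18)] using assms
    by (intro arg_cong[where f = "\<lambda>x. ?c * x"] sum.cong refl) (simp only: schur_orthogonality)
  also have "\<dots> = (if \<mu> = \<mu>' \<and> \<nu> = \<nu>' \<and> i = j' \<and> k = l' then ?c * (of_nat (fact p) / of_nat (dim \<mu>))
      * (of_nat (fact p) / of_nat (dim \<nu>)) * (\<Sum>r\<in>{1..dim \<mu>}. \<Sum>s\<in>{1..dim \<nu>}. ?G r s r s) else 0)"
    by (subst sum_kronecker) (auto simp: conj_ac)
  finally show ?thesis
    by (auto simp: sandwich_trace_def opmul_assoc power2_eq_square)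
qed

end
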